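(* Let $\mathcal{H}=\mathbb{R}\times\mathbb{R}\times\,]0,+\infty[$. The map associating to an irreducible planar Keplerian branch around ${\rm O}$ the parameters $(\alpha,\beta,\gamma)$ of its unifocal equation $r=\alpha x+\beta y+\gamma$ is a bijection from the space of irreducible planar Keplerian branches around ${\rm O}$ onto $\mathcal{H}$. Under this bijection: the set of irreducible Keplerian branches passing through a point ${\rm A}\neq{\rm O}$ is the intersection with $\mathcal{H}$ of a plane which cuts the boundary $\{\gamma=0\}$ of $\mathcal{H}$; the set of irreducible Keplerian branches passing through two points ${\rm A}$ and ${\rm B}$ not located on the same ray from ${\rm O}$ is the intersection with $\mathcal{H}$ of a straight line; this line cuts the boundary of $\mathcal{H}$, except if ${\rm O}$ lies on the open segment $]{\rm A},{\rm B}[$, in which case the line is contained in $\mathcal{H}$ and $\gamma$ is constant on the line.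
   Context: Work in the Euclidean plane $\mathbb{R}^2={\rm O}xy$ with origin ${\rm O}$, $r=\sqrt{x^2+y^2}$, and Newton's system $\ddot q=-q/r^3$. An extended solution is a continuous path $t\mapsto q(t)$ which is an analytic solution except at a discrete set of collision times where $q={\rm O}$, at which the motion bounces back along the same ray with the same energy; a Keplerian branch around ${\rm O}$ is the image of an extended solution. A branch is irreducible if it is not contained in a line (i.e. it is not rectilinear). For a nonrectilinear solution $q=(x,y)$, with $C=x\dot y-y\dot x$, $\alpha=\frac{x}{r}-\dot yC$, $\beta=\frac{y}{r}+\dot xC$ (constants of motion) and $\gamma=C^2>0$, the branch is exactly the set of points satisfying $r=\alpha x+\beta y+\gamma$, called its unifocal equation. A ray is a closed half-line from ${\rm O}$. *)

theory Defs
  imports "HOL-Analysis.Analysis"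
begin

text \<open>Points of the plane are pairs (x,y); the origin O is 0.
  norm (x,y) = sqrt (x^2 + y^2) = r.\<close>

definition kep_energy :: "real \<times> real \<Rightarrow> real \<times> real \<Rightarrow> real" where
  "kep_energy p w = (norm w)\<^sup>2 / 2 - 1 / norm p"

text \<open>Extended solution of the Kepler problem q'' = -q/r^3: a continuous path,
  defined on the whole time axis, whose collision times (q = O) form a discrete
  (locally finite) set, which is a solution away from collisions, and which at a
  collision bounces back along the same ray with the same energy.\<close>
definition ext_solution :: "(real \<Rightarrow> real \<times> real) \<Rightarrow> bool" where
  "ext_solution q \<longleftrightarrow>
     continuous_on UNIV q \<and>
     (\<forall>a b. finite {t \<in> {a..b}. q t = 0}) \<and>
     (\<exists>v. (\<forall>t. q t \<noteq> 0 \<longrightarrow>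
              (q has_vector_derivative v t) (at t) \<and>
              (v has_vector_derivative (- (1 / norm (q t) ^ 3)) *\<^sub>R q t) (at t)) \<and>
          (\<forall>t0. q t0 = 0 \<longrightarrow>
              (\<exists>e>0. \<forall>s. 0 < s \<and> s < e \<longrightarrow>
                 q (t0 + s) \<noteq> 0 \<and> q (t0 - s) \<noteq> 0 \<and>
                 (\<exists>c>0. q (t0 + s) = c *\<^sub>R q (t0 - s)) \<and>
                 kep_energy (q (t0 + s)) (v (t0 + s)) = kep_energy (q (t0 - s)) (v (t0 - s)))))"

definition kep_branch :: "(real \<times> real) set \<Rightarrow> bool" where
  "kep_branch K \<longleftrightarrow> (\<exists>q. ext_solution q \<and> K = range q)"

definition line2 :: "real \<times> real \<Rightarrow> real \<times> real \<Rightarrow> (real \<times> real) set" where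
  "line2 p u = {p + t *\<^sub>R u | t. True}"

definition irreducible_branch :: "(real \<times> real) set \<Rightarrow> bool" where
  "irreducible_branch K \<longleftrightarrow> kep_branch K \<and> \<not> (\<exists>p u. u \<noteq> 0 \<and> K \<subseteq> line2 p u)"

definition IrrBranches :: "(real \<times> real) set set" where
  "IrrBranches = {K. irreducible_branch K}"

definition Hspace :: "(real \<times> real \<times> real) set" where
  "Hspace = {(a, b, c). c > 0}"

definition unifocal :: "real \<times> real \<times> real \<Rightarrow> (real \<times> real) set" where
  "unifocal P = (case P of (a, b, c) \<Rightarrow> {(x, y). sqrt (x\<^sup>2 + y\<^sup>2) = a * x + b * y + c})"

definition branch_params :: "(real \<times> real) set \<Rightarrow> real \<times> real \<times> real" where
  "branch_params K = (THE P. P \<in> Hspace \<and> unifocal P = K)"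

definition ray :: "real \<times> real \<Rightarrow> (real \<times> real) set" where
  "ray u = {t *\<^sub>R u | t. t \<ge> 0}"

definition same_ray :: "real \<times> real \<Rightarrow> real \<times> real \<Rightarrow> bool" where
  "same_ray A B \<longleftrightarrow> (\<exists>u. u \<noteq> 0 \<and> A \<in> ray u \<and> B \<in> ray u)"

definition plane3 :: "real \<times> real \<times> real \<Rightarrow> real \<Rightarrow> (real \<times> real \<times> real) set" where
  "plane3 n d = {P. n \<bullet> P = d}"

definition line3 :: "real \<times> real \<times> real \<Rightarrow> real \<times> real \<times> real \<Rightarrow> (real \<times> real \<times> real) set" where
  "line3 P V = {P + t *\<^sub>R V | t. True}"

definition Hboundary :: "(real \<times> real \<times> real) set" where
  "Hboundary = {(a, b, c). c = 0}"

definition gamma_coord :: "real \<times> real \<times> real \<Rightarrow> real" where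
  "gamma_coord P = snd (snd P)"

end

theory Submission
  imports Defs
begin

text \<open>Along a motion without collision the angular momentum \<open>C\<close> and the quantities \<open>\<alpha>, \<beta>\<close>
  are constant, and \<open>r = \<alpha> x + \<beta> y + C\<^sup>2\<close> holds identically; if \<open>C = 0\<close> the direction
  \<open>q / r = (\<alpha>, \<beta>)\<close> is constant and the motion is rectilinear.  A motion with a collision is
  rectilinear as well: approaching the collision forces \<open>C\<^sup>2 = r - \<alpha> x - \<beta> y \<rightarrow> 0\<close>, and the
  bounce keeps the ray.  So an irreducible branch lies in the conic
  \<open>r = \<alpha> x + \<beta> y + \<gamma>\<close> with \<open>\<gamma> = C\<^sup>2 > 0\<close>, and it fills the whole conic: in polar form
  \<open>r = \<gamma> / (1 - e cos (\<theta> - \<phi>))\<close> over an arc of angles, the time \<open>\<integral> r\<^sup>2 / \<surd>\<gamma> d\<theta>\<close>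
  diverges at both ends of the arc, so the angle, which moves by Kepler's second law, sweeps the
  whole arc.  Conversely this time parametrisation of any such conic is a solution.  Three
  non-collinear points of the conic (its vertex and the ends of its latus rectum) determine
  \<open>(\<alpha>, \<beta>, \<gamma>)\<close>, which gives the bijection.  Finally, \<open>A\<close> lies on the branch iff
  \<open>(x\<^sub>A, y\<^sub>A, 1) \<bullet> (\<alpha>, \<beta>, \<gamma>) = |A|\<close>, a linear equation, whence the planes and lines.\<close>

section \<open>Calculus on the real line\<close>

lemma abs_cos_diff_le: "\<bar>cos u - cos w\<bar> \<le> \<bar>u - w\<bar>" for u w :: real
proof -
  have "\<bar>cos u - cos w\<bar> = 2 * \<bar>sin ((u + w) / 2)\<bar> * \<bar>sin ((w - u) / 2)\<bar>"
    by (simp add: cos_diff_cos abs_mult)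
  also have "\<dots> \<le> 2 * 1 * \<bar>(w - u) / 2\<bar>"
    by (intro mult_mono abs_sin_x_le_abs_x) auto
  finally show ?thesis by simp
qed

lemma surj_on_interval_if_unbounded:
  fixes F :: "real \<Rightarrow> real"
  assumes "is_interval I" "continuous_on I F"
    and below: "\<And>s. \<exists>a\<in>I. F a \<le> s" and above: "\<And>s. \<exists>b\<in>I. s \<le> F b"
  shows "F ` I = UNIV"
proof -
  have "is_interval (F ` I)"
    using assms(1,2) connected_continuous_image is_interval_connected_1 by blast
  moreover have "s \<in> F ` I" if "is_interval (F ` I)" for s
  proof -
    obtain a b where "a \<in> I" "F a \<le> s" "b \<in> I" "s \<le> F b" using below above by blast
    then show ?thesis using that unfolding is_interval_1 by blast
  qed
  ultimately show ?thesis by blast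
qed

lemma unbounded_above_if_deriv_ge_const:
  fixes F f :: "real \<Rightarrow> real"
  assumes "k > 0" "\<And>x. (F has_real_derivative f x) (at x)" "\<And>x. k \<le> f x"
  shows "\<exists>b. s \<le> F b"
proof -
  have "F 0 + k * x \<le> F x" if "0 \<le> x" for x
  proof -
    have "(\<lambda>x. F x - k * x) 0 \<le> (\<lambda>x. F x - k * x) x"
    proof (rule DERIV_nonneg_imp_nondecreasing[OF that])
      fix y
      have "((\<lambda>x. F x - k * x) has_real_derivative f y - k) (at y)"
        using assms(2) by (auto intro!: derivative_eq_intros)
      then show "\<exists>z. ((\<lambda>x. F x - k * x) has_real_derivative z) (at y) \<and> 0 \<le> z"
        using assms(3)[of y] by auto
    qed
    then show ?thesis by simp
  qed
  moreover have "s \<le> F 0 + k * (\<bar>s - F 0\<bar> / k)" "0 \<le> \<bar>s - F 0\<bar> / k"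
    using assms(1) by simp_all
  ultimately have "s \<le> F (\<bar>s - F 0\<bar> / k)" by (meson order_trans)
  then show ?thesis ..
qed

text \<open>If \<open>F' \<ge> K / (hi - x)\<^sup>2\<close> then \<open>F x - K / (hi - x)\<close> is nondecreasing, so \<open>F\<close> blows up at \<open>hi\<close>.\<close>

lemma unbounded_above_if_deriv_ge_inverse_square:
  fixes F f :: "real \<Rightarrow> real"
  assumes "m < hi" "K > 0"
    and der: "\<And>x. m \<le> x \<Longrightarrow> x < hi \<Longrightarrow> (F has_real_derivative f x) (at x)"
    and ge: "\<And>x. m \<le> x \<Longrightarrow> x < hi \<Longrightarrow> K / (hi - x)\<^sup>2 \<le> f x"
  shows "\<exists>b\<in>{m..<hi}. s \<le> F b"
proof -
  define G where "G x = F x - K / (hi - x)" for x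
  have G_mono: "G m \<le> G x" if "m \<le> x" "x < hi" for x
  proof (rule DERIV_nonneg_imp_nondecreasing[OF that(1)])
    fix y assume "m \<le> y" "y \<le> x"
    with that have y: "m \<le> y" "y < hi" by auto
    have "(G has_real_derivative f y - K / (hi - y)\<^sup>2) (at y)"
      unfolding G_def using der[OF y] y(2)
      by (auto intro!: derivative_eq_intros simp: power2_eq_square)
    then show "\<exists>z. (G has_real_derivative z) (at y) \<and> 0 \<le> z"
      using ge[OF y] by auto
  qed
  define d where "d = min ((hi - m) / 2) (K / (\<bar>s - G m\<bar> + 1))"
  have "0 < d" unfolding d_def using assms(1,2) by simp
  moreover have "d \<le> (hi - m) / 2" unfolding d_def by (rule min.cobounded1)
  moreover have "d \<le> K / (\<bar>s - G m\<bar> + 1)" unfolding d_def by (rule min.cobounded2)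
  ultimately have d: "0 < d" "d \<le> (hi - m) / 2" "d \<le> K / (\<bar>s - G m\<bar> + 1)" by auto
  have "d * (\<bar>s - G m\<bar> + 1) \<le> K"
    using d(3) by (simp add: le_divide_eq add_pos_nonneg)
  then have "\<bar>s - G m\<bar> + 1 \<le> K / d" using d(1) by (simp add: le_divide_eq mult.commute)
  moreover have "G m \<le> G (hi - d)" using d by (intro G_mono) auto
  ultimately have "s \<le> F (hi - d)" unfolding G_def by simp
  moreover have "hi - d \<in> {m..<hi}" using d by auto
  ultimately show ?thesis by blast
qed

lemma unbounded_below_if_deriv_ge_inverse_square:
  fixes F f :: "real \<Rightarrow> real"
  assumes "lo < m" "K > 0"
    and der: "\<And>x. lo < x \<Longrightarrow> x \<le> m \<Longrightarrow> (F has_real_derivative f x) (at x)"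
    and ge: "\<And>x. lo < x \<Longrightarrow> x \<le> m \<Longrightarrow> K / (x - lo)\<^sup>2 \<le> f x"
  shows "\<exists>a\<in>{lo<..m}. F a \<le> s"
proof -
  have "\<exists>b\<in>{- m..<- lo}. - s \<le> - F (- b)"
  proof (rule unbounded_above_if_deriv_ge_inverse_square[where f = "\<lambda>x. f (- x)"])
    fix x assume x: "- m \<le> x" "x < - lo"
    have "(F has_real_derivative f (- x)) (at (- x))" using der x by auto
    then show "((\<lambda>x. - F (- x)) has_real_derivative f (- x)) (at x)"
      using DERIV_minus DERIV_mirror by fastforce
    have "- lo - x = - x - lo" by simp
    then show "K / (- lo - x)\<^sup>2 \<le> f (- x)" using ge[of "- x"] x by (simp only:)
  qed (use assms in auto)
  then obtain b where "b \<in> {- m..<- lo}" "F (- b) \<le> s" by auto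
  then show ?thesis by (intro bexI[of _ "- b"]) auto
qed

lemma inv_into_has_real_derivative:
  fixes \<tau> f :: "real \<Rightarrow> real"
  assumes I: "open I" and der: "\<And>\<theta>. \<theta> \<in> I \<Longrightarrow> (\<tau> has_real_derivative f \<theta>) (at \<theta>)"
    and nz: "\<And>\<theta>. \<theta> \<in> I \<Longrightarrow> f \<theta> \<noteq> 0" and inj: "inj_on \<tau> I" and onto: "\<tau> ` I = UNIV"
  shows "(inv_into I \<tau> has_real_derivative inverse (f (inv_into I \<tau> t))) (at t)"
proof -
  let ?\<sigma> = "inv_into I \<tau>"
  have \<sigma>I: "?\<sigma> s \<in> I" for s using onto by (metis UNIV_I inv_into_into)
  have \<tau>\<sigma>: "\<tau> (?\<sigma> s) = s" for s using onto by (metis UNIV_I f_inv_into_f)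
  obtain d where d: "d > 0" "cball (?\<sigma> t) d \<subseteq> I"
    using I \<sigma>I open_contains_cball by blast
  have near: "z \<in> I" if "\<bar>z - ?\<sigma> t\<bar> \<le> d" for z
    using d that by (auto simp: dist_real_def abs_minus_commute)
  have "isCont ?\<sigma> (\<tau> (?\<sigma> t))"
  proof (rule isCont_inverse_function[where f = \<tau>, OF d(1)])
    fix z assume "\<bar>z - ?\<sigma> t\<bar> \<le> d"
    then have z: "z \<in> I" by (rule near)
    show "?\<sigma> (\<tau> z) = z" using inj z by (rule inv_into_f_f)
    show "isCont \<tau> z" using der[OF z] by (rule DERIV_isCont)
  qed
  then have "isCont ?\<sigma> t" by (simp only: \<tau>\<sigma>)
  show ?thesis
  proof (rule DERIV_inverse_function[where a = "t - 1" and b = "t + 1"])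
    show "(\<tau> has_real_derivative f (?\<sigma> t)) (at (?\<sigma> t))" by (rule der[OF \<sigma>I])
  qed (use nz[OF \<sigma>I] \<tau>\<sigma> \<open>isCont ?\<sigma> t\<close> in auto)
qed

section \<open>Vectors of the plane\<close>

lemma norm_pair_eq: "norm p = sqrt ((fst p)\<^sup>2 + (snd p)\<^sup>2)" for p :: "real \<times> real"
  by (cases p) (simp add: norm_Pair)

lemma norm_pair_square: "(norm p)\<^sup>2 = (fst p)\<^sup>2 + (snd p)\<^sup>2" for p :: "real \<times> real"
  by (simp add: norm_pair_eq)

lemma norm_cos_sin: "norm (cos \<theta>, sin \<theta>) = 1" for \<theta> :: real
  by (simp add: norm_Pair real_norm_def)

lemma sgn_pair: "sgn p = (fst p / norm p, snd p / norm p)" for p :: "real \<times> real"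
  by (cases p) (simp add: sgn_div_norm divide_inverse mult.commute)

lemma sgn_cos_sin: "sgn (cos \<theta>, sin \<theta>) = (cos \<theta>, sin \<theta>)" for \<theta> :: real
  by (simp only: sgn_div_norm norm_cos_sin) simp

lemma polar_coordinates:
  obtains e \<phi> where "e \<ge> 0" "0 \<le> \<phi>" "\<phi> < 2*pi" "\<alpha> = e * cos \<phi>" "\<beta> = e * sin \<phi>"
proof (cases "\<alpha> = 0 \<and> \<beta> = 0")
  case True then show ?thesis using that[of 0 0] by auto
next
  case False
  define e where "e = sqrt (\<alpha>\<^sup>2 + \<beta>\<^sup>2)"
  have e: "e > 0" unfolding e_def using False by (simp add: sum_power2_gt_zero_iff)
  have "(\<alpha>/e)\<^sup>2 + (\<beta>/e)\<^sup>2 = 1"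
    using e False unfolding e_def by (simp add: power_divide add_divide_distrib[symmetric])
  then obtain t where "0 \<le> t" "t < 2*pi" "\<alpha>/e = cos t" "\<beta>/e = sin t"
    by (rule sincos_total_2pi)
  then show ?thesis using e that[of e t] by (auto simp: field_simps)
qed

definition cross2 :: "real \<times> real \<Rightarrow> real \<times> real \<Rightarrow> real" where
  "cross2 u w = fst u * snd w - snd u * fst w"

lemma has_vector_derivative_fst_snd:
  fixes q :: "real \<Rightarrow> real \<times> real"
  assumes "(q has_vector_derivative w) (at t)"
  shows "((\<lambda>s. fst (q s)) has_real_derivative fst w) (at t)"
    and "((\<lambda>s. snd (q s)) has_real_derivative snd w) (at t)"
  using has_derivative_fst[OF assms[unfolded has_vector_derivative_def]]
    has_derivative_snd[OF assms[unfolded has_vector_derivative_def]]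
  by (simp_all add: has_real_derivative_iff_has_vector_derivative has_vector_derivative_def)

lemma norm_has_real_derivative:
  fixes q :: "real \<Rightarrow> real \<times> real"
  assumes "(q has_vector_derivative w) (at t)" "q t \<noteq> 0"
  shows "((\<lambda>s. norm (q s)) has_real_derivative
           (fst (q t) * fst w + snd (q t) * snd w) / norm (q t)) (at t)"
proof -
  have pos: "(fst (q t))\<^sup>2 + (snd (q t))\<^sup>2 > 0"
    using assms(2) norm_pair_square[of "q t"] by (metis zero_less_norm_iff zero_less_power)
  have "((\<lambda>s. (fst (q s))\<^sup>2 + (snd (q s))\<^sup>2) has_real_derivative
      2 * fst (q t) * fst w + 2 * snd (q t) * snd w) (at t)"
    by (auto intro!: derivative_eq_intros has_vector_derivative_fst_snd[OF assms(1)]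
        simp: power2_eq_square)
  from DERIV_chain2[OF DERIV_real_sqrt[OF pos] this]
  have "((\<lambda>s. norm (q s)) has_real_derivative
      (fst w * (2 * fst (q t)) + snd w * (2 * snd (q t))) / (2 * norm (q t))) (at t)"
    using assms(2) by (simp add: norm_pair_eq[symmetric] field_simps flip: norm_pair_eq)
  moreover have "(fst w * (2 * fst (q t)) + snd w * (2 * snd (q t))) / (2 * norm (q t))
      = (fst (q t) * fst w + snd (q t) * snd w) / norm (q t)"
    using assms(2) by (simp add: field_simps)
  ultimately show ?thesis by simp
qed

lemma direction_has_real_derivative:
  fixes q :: "real \<Rightarrow> real \<times> real"
  assumes dq: "(q has_vector_derivative w) (at t)" and nz: "q t \<noteq> 0"
  defines "h \<equiv> cross2 (q t) w / (norm (q t))\<^sup>2"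
  shows "((\<lambda>s. fst (q s) / norm (q s)) has_real_derivative - (snd (q t) / norm (q t)) * h) (at t)"
    and "((\<lambda>s. snd (q s) / norm (q s)) has_real_derivative (fst (q t) / norm (q t)) * h) (at t)"
proof -
  define r where "r = norm (q t)"
  have r: "r > 0" "r\<^sup>2 = (fst (q t))\<^sup>2 + (snd (q t))\<^sup>2"
    using nz norm_pair_square[of "q t"] by (simp_all add: r_def)
  note x = has_vector_derivative_fst_snd(1)[OF dq] and y = has_vector_derivative_fst_snd(2)[OF dq]
  note dr = norm_has_real_derivative[OF dq nz, folded r_def]
  have "((\<lambda>s. fst (q s) / norm (q s)) has_real_derivative
      (fst w * r - fst (q t) * ((fst (q t) * fst w + snd (q t) * snd w) / r)) / (r * r)) (at t)"
    using nz by (auto intro!: derivative_eq_intros x dr simp: r_def)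
  moreover have "(fst w * r - fst (q t) * ((fst (q t) * fst w + snd (q t) * snd w) / r)) / (r * r)
      = - (snd (q t) / r) * h"
    using r unfolding h_def r_def[symmetric]
    by (simp add: cross2_def field_simps power2_eq_square) algebra
  ultimately show "((\<lambda>s. fst (q s) / norm (q s)) has_real_derivative - (snd (q t) / norm (q t)) * h) (at t)"
    by (simp add: r_def)
  have "((\<lambda>s. snd (q s) / norm (q s)) has_real_derivative
      (snd w * r - snd (q t) * ((fst (q t) * fst w + snd (q t) * snd w) / r)) / (r * r)) (at t)"
    using nz by (auto intro!: derivative_eq_intros y dr simp: r_def)
  moreover have "(snd w * r - snd (q t) * ((fst (q t) * fst w + snd (q t) * snd w) / r)) / (r * r)
      = (fst (q t) / r) * h"
    using r unfolding h_def r_def[symmetric]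
    by (simp add: cross2_def field_simps power2_eq_square) algebra
  ultimately show "((\<lambda>s. snd (q s) / norm (q s)) has_real_derivative (fst (q t) / norm (q t)) * h) (at t)"
    by (simp add: r_def)
qed

section \<open>The conic in polar coordinates\<close>

lemma arccos_inverse:
  assumes "e \<ge> 1"
  shows "0 \<le> arccos (1/e)" "arccos (1/e) \<le> pi/2" "e * cos (arccos (1/e)) = 1"
proof -
  have h: "0 \<le> 1/e" "1/e \<le> 1" using assms by auto
  show "0 \<le> arccos (1/e)" using h by (intro arccos_lbound) linarith+
  show "arccos (1/e) \<le> pi/2" using h by (rule arccos_le_pi2)
  have "cos (arccos (1/e)) = 1/e" using h by (intro cos_arccos) linarith+
  then show "e * cos (arccos (1/e)) = 1" using assms by simp
qed

text \<open>The conic \<open>r = \<gamma> / (1 - e cos (\<theta> - \<phi>))\<close> in polar coordinates, where \<open>(\<alpha>, \<beta>) = (e cos \<phi>, e sin \<phi>)\<close>.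
  Its branch is swept by the arc of angles around \<open>\<phi> + pi\<close> on which the denominator is positive.\<close>

definition polar_denom :: "real \<Rightarrow> real \<Rightarrow> real \<Rightarrow> real" where
  "polar_denom e \<phi> \<theta> = 1 - e * cos (\<theta> - \<phi>)"

definition polar_radius :: "real \<Rightarrow> real \<Rightarrow> real \<Rightarrow> real \<Rightarrow> real" where
  "polar_radius e \<phi> \<gamma> \<theta> = \<gamma> / polar_denom e \<phi> \<theta>"

definition conic_arc :: "real \<Rightarrow> real \<Rightarrow> real set" where
  "conic_arc e \<phi> =
     (if e < 1 then UNIV else {\<phi> + arccos (1/e) <..< \<phi> + 2*pi - arccos (1/e)})"

lemma polar_denom_expand:
  "polar_denom e \<phi> \<theta> = 1 - (e * cos \<phi>) * cos \<theta> - (e * sin \<phi>) * sin \<theta>"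
  unfolding polar_denom_def by (simp add: cos_diff algebra_simps)

lemma conic_arc_bounded:
  "e \<ge> 1 \<Longrightarrow> conic_arc e \<phi> = {\<phi> + arccos (1/e) <..< \<phi> + 2*pi - arccos (1/e)}"
  by (simp add: conic_arc_def)

lemma polar_denom_pos:
  assumes "e \<ge> 0" "\<theta> \<in> conic_arc e \<phi>"
  shows "polar_denom e \<phi> \<theta> > 0"
proof (cases "e < 1")
  case True
  have "e * cos (\<theta> - \<phi>) \<le> e * 1" using assms(1) by (intro mult_left_mono) auto
  then show ?thesis using True by (simp add: polar_denom_def)
next
  case False
  let ?a = "arccos (1/e)"
  have e1: "e \<ge> 1" using False by simp
  note a = arccos_inverse[OF e1]
  have \<theta>: "?a < \<theta> - \<phi>" "\<theta> - \<phi> < 2*pi - ?a" using assms(2) False by (auto simp: conic_arc_def)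
  have "cos (\<theta> - \<phi>) < cos ?a"
  proof (cases "\<theta> - \<phi> \<le> pi")
    case True
    then show ?thesis using a \<theta> by (intro cos_monotone_0_pi) auto
  next
    case False
    have "cos (2*pi - (\<theta> - \<phi>)) < cos ?a" using a \<theta> False by (intro cos_monotone_0_pi) auto
    then show ?thesis by simp
  qed
  then have "e * cos (\<theta> - \<phi>) < e * cos ?a" using e1 by simp
  then show ?thesis using a by (simp add: polar_denom_def)
qed

lemma mem_conic_arc:
  assumes "e \<ge> 0" "polar_denom e \<phi> \<theta> > 0" "\<phi> \<le> \<theta>" "\<theta> < \<phi> + 2*pi"
  shows "\<theta> \<in> conic_arc e \<phi>"
proof (cases "e < 1")
  case True then show ?thesis by (simp add: conic_arc_def)
next
  case False
  let ?a = "arccos (1/e)"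
  have e1: "e \<ge> 1" using False by simp
  note a = arccos_inverse[OF e1]
  have ec: "e * cos (\<theta> - \<phi>) < 1" using assms(2) by (simp add: polar_denom_def)
  have "\<not> \<theta> - \<phi> \<le> ?a"
  proof
    assume "\<theta> - \<phi> \<le> ?a"
    then have "cos ?a \<le> cos (\<theta> - \<phi>)" using a assms by (intro cos_monotone_0_pi_le) auto
    then have "e * cos ?a \<le> e * cos (\<theta> - \<phi>)" using e1 by simp
    then show False using a ec by simp
  qed
  moreover have "\<not> \<theta> - \<phi> \<ge> 2*pi - ?a"
  proof
    assume "\<theta> - \<phi> \<ge> 2*pi - ?a"
    then have "cos ?a \<le> cos (2*pi - (\<theta> - \<phi>))" using a assms by (intro cos_monotone_0_pi_le) auto
    then have "e * cos ?a \<le> e * cos (\<theta> - \<phi>)" using e1 by simp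
    then show False using a ec by simp
  qed
  ultimately show ?thesis using False by (auto simp: conic_arc_def)
qed

lemma polar_denom_le_dist_ends:
  assumes "e \<ge> 1"
  shows "polar_denom e \<phi> \<theta> \<le> e * \<bar>\<theta> - (\<phi> + arccos (1/e))\<bar>"
    and "polar_denom e \<phi> \<theta> \<le> e * \<bar>\<theta> - (\<phi> + 2*pi - arccos (1/e))\<bar>"
proof -
  let ?a = "arccos (1/e)"
  note a = arccos_inverse[OF assms]
  have "polar_denom e \<phi> \<theta> = e * (cos ?a - cos (\<theta> - \<phi>))"
    using a by (simp add: polar_denom_def algebra_simps)
  also have "\<dots> \<le> e * \<bar>cos ?a - cos (\<theta> - \<phi>)\<bar>" using assms by (intro mult_left_mono) auto
  finally have *: "polar_denom e \<phi> \<theta> \<le> e * \<bar>cos ?a - cos (\<theta> - \<phi>)\<bar>" .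
  have "\<bar>cos ?a - cos (\<theta> - \<phi>)\<bar> \<le> \<bar>?a - (\<theta> - \<phi>)\<bar>" by (rule abs_cos_diff_le)
  then show "polar_denom e \<phi> \<theta> \<le> e * \<bar>\<theta> - (\<phi> + ?a)\<bar>" using * assms
    by (smt (verit) mult_left_mono)
  have "\<bar>cos (2*pi - ?a) - cos (\<theta> - \<phi>)\<bar> \<le> \<bar>(2*pi - ?a) - (\<theta> - \<phi>)\<bar>" by (rule abs_cos_diff_le)
  then show "polar_denom e \<phi> \<theta> \<le> e * \<bar>\<theta> - (\<phi> + 2*pi - ?a)\<bar>" using * assms
    by (smt (verit) cos_2pi_minus mult_left_mono)
qed

lemma antipode_in_conic_arc: "\<phi> + pi \<in> conic_arc e \<phi>"
  using arccos_inverse[of e] pi_gt3 by (auto simp: conic_arc_def)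

lemma conic_arc_einterval:
  "\<exists>lo hi::ereal. lo < hi \<and> conic_arc e \<phi> = {\<theta>. lo < ereal \<theta> \<and> ereal \<theta> < hi}"
proof (cases "e < 1")
  case True
  then show ?thesis
    by (intro exI[of _ "-\<infinity>"] exI[of _ "\<infinity>"]) (auto simp: conic_arc_def)
next
  case False
  then show ?thesis
    using arccos_inverse[of e] pi_gt3
    by (intro exI[of _ "ereal (\<phi> + arccos (1/e))"] exI[of _ "ereal (\<phi> + 2*pi - arccos (1/e))"])
       (auto simp: conic_arc_def)
qed

lemma open_conic_arc: "open (conic_arc e \<phi>)"
  by (simp add: conic_arc_def)

lemma is_interval_conic_arc: "is_interval (conic_arc e \<phi>)"
  by (simp add: conic_arc_def is_interval_convex_1)

lemma polar_radius_pos: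
  "e \<ge> 0 \<Longrightarrow> \<gamma> > 0 \<Longrightarrow> \<theta> \<in> conic_arc e \<phi> \<Longrightarrow> polar_radius e \<phi> \<gamma> \<theta> > 0"
  unfolding polar_radius_def using polar_denom_pos by auto

definition conic_point :: "real \<Rightarrow> real \<Rightarrow> real \<Rightarrow> real \<Rightarrow> real \<times> real" where
  "conic_point e \<phi> \<gamma> \<theta> = polar_radius e \<phi> \<gamma> \<theta> *\<^sub>R (cos \<theta>, sin \<theta>)"

lemma norm_conic_point:
  "e \<ge> 0 \<Longrightarrow> \<gamma> > 0 \<Longrightarrow> \<theta> \<in> conic_arc e \<phi> \<Longrightarrow> norm (conic_point e \<phi> \<gamma> \<theta>) = polar_radius e \<phi> \<gamma> \<theta>"
  using polar_radius_pos[of e \<gamma> \<theta> \<phi>]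
  by (simp only: conic_point_def norm_scaleR norm_cos_sin) simp

lemma unifocal_iff: "(x, y) \<in> unifocal (a, b, c) \<longleftrightarrow> sqrt (x\<^sup>2 + y\<^sup>2) = a * x + b * y + c"
  by (simp add: unifocal_def)

lemma conic_point_in_unifocal:
  assumes e: "e \<ge> 0" and \<gamma>: "\<gamma> > 0" and \<theta>: "\<theta> \<in> conic_arc e \<phi>"
  shows "conic_point e \<phi> \<gamma> \<theta> \<in> unifocal (e * cos \<phi>, e * sin \<phi>, \<gamma>)"
proof -
  let ?r = "polar_radius e \<phi> \<gamma> \<theta>"
  have "?r * polar_denom e \<phi> \<theta> = \<gamma>" using polar_denom_pos[OF e \<theta>] by (simp add: polar_radius_def)
  then have "?r = e * cos \<phi> * (?r * cos \<theta>) + e * sin \<phi> * (?r * sin \<theta>) + \<gamma>"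
    unfolding polar_denom_expand by (simp add: algebra_simps)
  moreover have "sqrt ((?r * cos \<theta>)\<^sup>2 + (?r * sin \<theta>)\<^sup>2) = ?r"
    using norm_conic_point[OF e \<gamma> \<theta>] by (simp add: conic_point_def norm_Pair)
  ultimately show ?thesis by (simp add: conic_point_def unifocal_iff)
qed

lemma unifocal_point_polar:
  assumes p: "p \<in> unifocal (e * cos \<phi>, e * sin \<phi>, \<gamma>)" and \<gamma>: "\<gamma> > 0"
    and \<theta>: "sgn p = (cos \<theta>, sin \<theta>)"
  shows "polar_denom e \<phi> \<theta> > 0" "p = conic_point e \<phi> \<gamma> \<theta>"
proof -
  have "p \<noteq> 0" using p \<gamma> by (auto simp: unifocal_def zero_prod_def)
  then have scaled: "p = norm p *\<^sub>R (cos \<theta>, sin \<theta>)" by (simp add: \<theta>[symmetric] sgn_div_norm)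
  then have polar: "p = (norm p * cos \<theta>, norm p * sin \<theta>)" by (metis scaleR_Pair real_scaleR_def)
  have "norm p = e * cos \<phi> * fst p + e * sin \<phi> * snd p + \<gamma>"
    using p by (cases p) (simp add: unifocal_iff norm_Pair)
  also have "\<dots> = e * cos \<phi> * (norm p * cos \<theta>) + e * sin \<phi> * (norm p * sin \<theta>) + \<gamma>"
    by (subst (1 2) polar) simp
  finally have r_denom: "norm p * polar_denom e \<phi> \<theta> = \<gamma>" by (simp add: polar_denom_expand algebra_simps)
  then show D: "polar_denom e \<phi> \<theta> > 0"
    using \<open>p \<noteq> 0\<close> \<gamma> by (metis zero_less_mult_pos zero_less_norm_iff)
  have "norm p = polar_radius e \<phi> \<gamma> \<theta>" using r_denom D by (simp add: polar_radius_def field_simps)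
  then show "p = conic_point e \<phi> \<gamma> \<theta>" by (subst scaled) (simp add: conic_point_def)
qed

lemma unifocal_eq_conic_points:
  assumes e: "e \<ge> 0" and \<gamma>: "\<gamma> > 0" and \<phi>: "0 \<le> \<phi>" "\<phi> < 2*pi"
  shows "unifocal (e * cos \<phi>, e * sin \<phi>, \<gamma>) = conic_point e \<phi> \<gamma> ` conic_arc e \<phi>"
proof (intro antisym subsetI)
  fix p assume p: "p \<in> unifocal (e * cos \<phi>, e * sin \<phi>, \<gamma>)"
  have "norm (sgn p) = 1" using p \<gamma> by (auto simp: unifocal_def zero_prod_def norm_sgn)
  then have "(fst (sgn p))\<^sup>2 + (snd (sgn p))\<^sup>2 = 1" using norm_pair_square[of "sgn p"] by simp
  then obtain t where t: "0 \<le> t" "t < 2*pi" "fst (sgn p) = cos t" "snd (sgn p) = sin t"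
    by (rule sincos_total_2pi)
  text \<open>Shift \<open>t\<close> by \<open>2 pi\<close> if necessary to land in the arc, which starts after \<open>\<phi>\<close>.\<close>
  obtain \<theta> where "sgn p = (cos \<theta>, sin \<theta>)" "\<phi> \<le> \<theta>" "\<theta> < \<phi> + 2*pi"
  proof (cases "\<phi> \<le> t")
    case True then show ?thesis using that[of t] t \<phi> by (simp add: prod_eq_iff)
  next
    case False then show ?thesis using that[of "t + 2*pi"] t \<phi> by (simp add: prod_eq_iff)
  qed
  then show "p \<in> conic_point e \<phi> \<gamma> ` conic_arc e \<phi>"
    using unifocal_point_polar[OF p \<gamma>] mem_conic_arc[OF e] by blast
qed (use conic_point_in_unifocal[OF e \<gamma>] in blast)

section \<open>Time along the conic\<close>

text \<open>\<open>dt/d\<theta> = r\<^sup>2 / C\<close> with \<open>C = \<surd>\<gamma>\<close>, by Kepler's second law \<open>r\<^sup>2 d\<theta>/dt = C\<close>.\<close>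

definition time_density :: "real \<Rightarrow> real \<Rightarrow> real \<Rightarrow> real \<Rightarrow> real" where
  "time_density e \<phi> \<gamma> \<theta> = (polar_radius e \<phi> \<gamma> \<theta>)\<^sup>2 / sqrt \<gamma>"

lemma time_density_pos:
  "e \<ge> 0 \<Longrightarrow> \<gamma> > 0 \<Longrightarrow> \<theta> \<in> conic_arc e \<phi> \<Longrightarrow> time_density e \<phi> \<gamma> \<theta> > 0"
  unfolding time_density_def polar_radius_def using polar_denom_pos[of e \<theta> \<phi>] by auto

lemma time_density_ge:
  assumes "e \<ge> 0" "\<gamma> > 0" "\<theta> \<in> conic_arc e \<phi>" "polar_denom e \<phi> \<theta> \<le> D"
  shows "(\<gamma> / D)\<^sup>2 / sqrt \<gamma> \<le> time_density e \<phi> \<gamma> \<theta>"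
proof -
  have "0 < polar_denom e \<phi> \<theta>" using polar_denom_pos assms(1,3) .
  then have "\<gamma> / D \<le> \<gamma> / polar_denom e \<phi> \<theta>" "0 \<le> \<gamma> / D"
    using assms(2,4) by (auto intro: divide_left_mono)
  then have "(\<gamma> / D)\<^sup>2 \<le> (polar_radius e \<phi> \<gamma> \<theta>)\<^sup>2"
    unfolding polar_radius_def by (intro power_mono)
  then show ?thesis unfolding time_density_def using assms(2) by (intro divide_right_mono) auto
qed

lemma time_antiderivative:
  assumes "e \<ge> 0" "\<gamma> > 0"
  shows "\<exists>F. \<forall>\<theta>\<in>conic_arc e \<phi>. (F has_real_derivative time_density e \<phi> \<gamma> \<theta>) (at \<theta>)"
proof -
  obtain lo hi :: ereal
    where lh: "lo < hi" "conic_arc e \<phi> = {\<theta>. lo < ereal \<theta> \<and> ereal \<theta> < hi}"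
    using conic_arc_einterval by blast
  have "isCont (time_density e \<phi> \<gamma>) \<theta>" if "\<theta> \<in> conic_arc e \<phi>" for \<theta>
    unfolding time_density_def polar_radius_def using polar_denom_pos[OF assms(1) that] assms(2)
    by (auto simp: polar_denom_def intro!: continuous_intros)
  then have "\<exists>F. \<forall>x::real. lo < x \<longrightarrow> x < hi \<longrightarrow>
      (F has_vector_derivative time_density e \<phi> \<gamma> x) (at x)"
    using lh by (intro einterval_antiderivative) auto
  then show ?thesis
    using lh(2) by (auto simp: has_real_derivative_iff_has_vector_derivative)
qed

lemma time_unbounded_small_eccentricity:
  assumes e: "0 \<le> e" "e < 1" and \<gamma>: "\<gamma> > 0"
    and F: "\<And>\<theta>. (F has_real_derivative time_density e \<phi> \<gamma> \<theta>) (at \<theta>)"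
  shows "\<exists>a. F a \<le> s" "\<exists>b. s \<le> F b"
proof -
  let ?f = "time_density e \<phi> \<gamma>" and ?k = "(\<gamma> / (1 + e))\<^sup>2 / sqrt \<gamma>"
  have "polar_denom e \<phi> \<theta> \<le> 1 + e" for \<theta>
    using e mult_left_mono[of "- cos (\<theta> - \<phi>)" 1 e] by (simp add: polar_denom_def)
  then have ge: "?k \<le> ?f \<theta>" for \<theta>
    using time_density_ge[OF e(1) \<gamma>] e(2) by (simp add: conic_arc_def)
  have pos: "?k > 0" using e \<gamma> by simp
  show "\<exists>b. s \<le> F b" using unbounded_above_if_deriv_ge_const[OF pos F ge] .
  have "\<exists>a. - s \<le> - F (- a)"
  proof (rule unbounded_above_if_deriv_ge_const[OF pos])
    show "((\<lambda>x. - F (- x)) has_real_derivative ?f (- x)) (at x)" for x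
      using F[of "- x"] DERIV_minus DERIV_mirror by fastforce
  qed (use ge in auto)
  then show "\<exists>a. F a \<le> s" by auto
qed

lemma time_unbounded_large_eccentricity:
  assumes e: "1 \<le> e" and \<gamma>: "\<gamma> > 0"
    and F: "\<And>\<theta>. \<theta> \<in> conic_arc e \<phi> \<Longrightarrow> (F has_real_derivative time_density e \<phi> \<gamma> \<theta>) (at \<theta>)"
  shows "\<exists>a\<in>conic_arc e \<phi>. F a \<le> s" "\<exists>b\<in>conic_arc e \<phi>. s \<le> F b"
proof -
  let ?f = "time_density e \<phi> \<gamma>" and ?I = "conic_arc e \<phi>"
  define lo where "lo = \<phi> + arccos (1/e)"
  define hi where "hi = \<phi> + 2*pi - arccos (1/e)"
  define K where "K = \<gamma>\<^sup>2 / (e\<^sup>2 * sqrt \<gamma>)"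
  have e0: "0 \<le> e" using e by simp
  have I: "?I = {lo<..<hi}" using conic_arc_bounded[OF e] by (simp add: lo_def hi_def)
  have m: "lo < \<phi> + pi" "\<phi> + pi < hi" using antipode_in_conic_arc I by auto
  have K: "K > 0" using \<gamma> e by (simp add: K_def)
  have "K / (hi - \<theta>)\<^sup>2 \<le> ?f \<theta>" if "\<theta> \<in> ?I" for \<theta>
  proof -
    have "polar_denom e \<phi> \<theta> \<le> e * (hi - \<theta>)"
      using polar_denom_le_dist_ends(2)[OF e, of \<phi> \<theta>] that I by (simp add: hi_def)
    from time_density_ge[OF e0 \<gamma> that this] show ?thesis
      by (simp add: K_def power_divide power_mult_distrib mult_ac)
  qed
  then obtain b where "b \<in> {\<phi> + pi..<hi}" "s \<le> F b"
    using unbounded_above_if_deriv_ge_inverse_square[OF m(2) K, of F ?f] F I m by force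
  then show "\<exists>b\<in>?I. s \<le> F b" using I m by auto
  have "K / (\<theta> - lo)\<^sup>2 \<le> ?f \<theta>" if "\<theta> \<in> ?I" for \<theta>
  proof -
    have "polar_denom e \<phi> \<theta> \<le> e * (\<theta> - lo)"
      using polar_denom_le_dist_ends(1)[OF e, of \<phi> \<theta>] that I by (simp add: lo_def)
    from time_density_ge[OF e0 \<gamma> that this] show ?thesis
      by (simp add: K_def power_divide power_mult_distrib mult_ac)
  qed
  then obtain a where "a \<in> {lo<..\<phi> + pi}" "F a \<le> s"
    using unbounded_below_if_deriv_ge_inverse_square[OF m(1) K, of F ?f] F I m by force
  then show "\<exists>a\<in>?I. F a \<le> s" using I m by auto
qed

lemma time_along_arc:
  assumes e: "e \<ge> 0" and \<gamma>: "\<gamma> > 0"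
  obtains \<tau> where "\<And>\<theta>. \<theta> \<in> conic_arc e \<phi> \<Longrightarrow> (\<tau> has_real_derivative time_density e \<phi> \<gamma> \<theta>) (at \<theta>)"
    "inj_on \<tau> (conic_arc e \<phi>)" "\<tau> ` conic_arc e \<phi> = UNIV"
proof -
  let ?I = "conic_arc e \<phi>"
  obtain F where F: "\<And>\<theta>. \<theta> \<in> ?I \<Longrightarrow> (F has_real_derivative time_density e \<phi> \<gamma> \<theta>) (at \<theta>)"
    using time_antiderivative[OF e \<gamma>] by blast
  have between: "x \<in> ?I" if "a \<in> ?I" "b \<in> ?I" "a \<le> x" "x \<le> b" for a b x
    using is_interval_conic_arc that unfolding is_interval_1 by blast
  have "strict_mono_on ?I F"
  proof (rule strict_mono_onI)
    fix a b assume ab: "a \<in> ?I" "b \<in> ?I" "a < b"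
    show "F a < F b"
    proof (rule DERIV_pos_imp_increasing[OF ab(3)])
      fix x assume "a \<le> x" "x \<le> b"
      then have "x \<in> ?I" using between ab by blast
      then show "\<exists>y. (F has_real_derivative y) (at x) \<and> 0 < y"
        using F time_density_pos[OF e \<gamma>] by blast
    qed
  qed
  then have "inj_on F ?I" by (rule strict_mono_on_imp_inj_on)
  moreover have "F ` ?I = UNIV"
  proof (rule surj_on_interval_if_unbounded[OF is_interval_conic_arc])
    show "continuous_on ?I F"
      using F by (intro continuous_at_imp_continuous_on ballI) (auto intro: DERIV_isCont)
    show "\<exists>a\<in>?I. F a \<le> s" "\<exists>b\<in>?I. s \<le> F b" for s
    proof (atomize (full), cases "e < 1")
      case True
      then have "?I = UNIV" by (simp add: conic_arc_def)
      then show "(\<exists>a\<in>?I. F a \<le> s) \<and> (\<exists>b\<in>?I. s \<le> F b)"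
        using time_unbounded_small_eccentricity[OF e True \<gamma>, where F = F and \<phi> = \<phi> and s = s] F
        by auto
    next
      case False
      then show "(\<exists>a\<in>?I. F a \<le> s) \<and> (\<exists>b\<in>?I. s \<le> F b)"
        using time_unbounded_large_eccentricity[of e \<gamma> \<phi> F s] \<gamma> F by simp
    qed
  qed
  ultimately show ?thesis using F that by blast
qed

section \<open>Every conic is a Keplerian branch\<close>

definition kepler_motion ::
    "(real \<Rightarrow> real \<times> real) \<Rightarrow> (real \<Rightarrow> real \<times> real) \<Rightarrow> real set \<Rightarrow> bool" where
  "kepler_motion q v S \<longleftrightarrow> (\<forall>t\<in>S. q t \<noteq> 0 \<and> (q has_vector_derivative v t) (at t) \<and>
      (v has_vector_derivative (- (1 / norm (q t) ^ 3)) *\<^sub>R q t) (at t))"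

lemma kepler_motionD:
  assumes "kepler_motion q v S" "t \<in> S"
  shows "q t \<noteq> 0" "(q has_vector_derivative v t) (at t)"
    "(v has_vector_derivative (- (1 / norm (q t) ^ 3)) *\<^sub>R q t) (at t)"
  using assms by (auto simp: kepler_motion_def)

lemma ext_solution_if_collision_free:
  assumes "kepler_motion q v UNIV"
  shows "ext_solution q"
  unfolding ext_solution_def
proof (intro conjI allI exI[of _ v])
  show "continuous_on UNIV q"
    using assms unfolding kepler_motion_def
    by (intro continuous_at_imp_continuous_on ballI) (meson UNIV_I has_vector_derivative_continuous)
qed (use assms in \<open>auto simp: kepler_motion_def\<close>)

definition conic_velocity :: "real \<Rightarrow> real \<Rightarrow> real \<Rightarrow> real \<Rightarrow> real \<times> real" where
  "conic_velocity e \<phi> \<gamma> \<theta> = (1 / sqrt \<gamma>) *\<^sub>R (e * sin \<phi> - sin \<theta>, cos \<theta> - e * cos \<phi>)"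

lemma conic_point_has_derivative:
  assumes "polar_denom e \<phi> \<theta> \<noteq> 0"
  shows "(conic_point e \<phi> \<gamma> has_vector_derivative
           (\<gamma> / (polar_denom e \<phi> \<theta>)\<^sup>2) *\<^sub>R (e * sin \<phi> - sin \<theta>, cos \<theta> - e * cos \<phi>)) (at \<theta>)"
proof -
  let ?D = "polar_denom e \<phi> \<theta>" and ?D' = "e * sin \<theta> * cos \<phi> - e * cos \<theta> * sin \<phi>"
  have D': "(polar_denom e \<phi> has_real_derivative ?D') (at \<theta>)"
    unfolding polar_denom_expand[abs_def] by (auto intro!: derivative_eq_intros simp: algebra_simps)
  have x: "((\<lambda>\<theta>. \<gamma> * cos \<theta> / polar_denom e \<phi> \<theta>) has_real_derivative
      ((\<gamma> * - sin \<theta>) * ?D - (\<gamma> * cos \<theta>) * ?D') / (?D * ?D)) (at \<theta>)"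
    by (intro DERIV_divide DERIV_cmult DERIV_cos D' assms)
  have y: "((\<lambda>\<theta>. \<gamma> * sin \<theta> / polar_denom e \<phi> \<theta>) has_real_derivative
      ((\<gamma> * cos \<theta>) * ?D - (\<gamma> * sin \<theta>) * ?D') / (?D * ?D)) (at \<theta>)"
    by (intro DERIV_divide DERIV_cmult DERIV_sin D' assms)
  have "(\<gamma> * - sin \<theta>) * ?D - (\<gamma> * cos \<theta>) * ?D' = \<gamma> * (e * sin \<phi> - sin \<theta>)"
       "(\<gamma> * cos \<theta>) * ?D - (\<gamma> * sin \<theta>) * ?D' = \<gamma> * (cos \<theta> - e * cos \<phi>)"
    using sin_cos_squared_add[of \<theta>] unfolding polar_denom_expand power2_eq_square by algebra+
  then have "((\<lambda>\<theta>. (\<gamma> * cos \<theta> / polar_denom e \<phi> \<theta>, \<gamma> * sin \<theta> / polar_denom e \<phi> \<theta>)) has_vector_derivative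
      (\<gamma> * (e * sin \<phi> - sin \<theta>) / (?D * ?D), \<gamma> * (cos \<theta> - e * cos \<phi>) / (?D * ?D))) (at \<theta>)"
    using x y by (intro has_vector_derivative_Pair)
      (simp_all add: has_real_derivative_iff_has_vector_derivative[symmetric])
  then show ?thesis by (simp add: conic_point_def[abs_def] polar_radius_def power2_eq_square)
qed

lemma conic_velocity_has_derivative:
  "(conic_velocity e \<phi> \<gamma> has_vector_derivative (1 / sqrt \<gamma>) *\<^sub>R (- cos \<theta>, - sin \<theta>)) (at \<theta>)"
proof -
  have "((\<lambda>\<theta>. (e * sin \<phi> - sin \<theta>, cos \<theta> - e * cos \<phi>)) has_vector_derivative (- cos \<theta>, - sin \<theta>)) (at \<theta>)"
    by (intro has_vector_derivative_Pair)
      (auto intro!: derivative_eq_intros simp: has_real_derivative_iff_has_vector_derivative[symmetric])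
  from has_vector_derivative_scaleR[OF DERIV_const this, of "1 / sqrt \<gamma>"]
  show ?thesis unfolding conic_velocity_def[abs_def] by simp
qed

lemma conic_motion:
  assumes e: "e \<ge> 0" and \<gamma>: "\<gamma> > 0" and \<sigma>I: "\<And>t. \<sigma> t \<in> conic_arc e \<phi>"
    and \<sigma>': "\<And>t. (\<sigma> has_real_derivative inverse (time_density e \<phi> \<gamma> (\<sigma> t))) (at t)"
  shows "kepler_motion (conic_point e \<phi> \<gamma> \<circ> \<sigma>) (conic_velocity e \<phi> \<gamma> \<circ> \<sigma>) UNIV"
  unfolding kepler_motion_def
proof (intro ballI conjI)
  fix t
  let ?\<theta> = "\<sigma> t" let ?D = "polar_denom e \<phi> ?\<theta>"
  have D: "?D > 0" using polar_denom_pos[OF e \<sigma>I] .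
  have r: "polar_radius e \<phi> \<gamma> ?\<theta> > 0" using polar_radius_pos[OF e \<gamma> \<sigma>I] .
  have inv_time: "inverse (time_density e \<phi> \<gamma> ?\<theta>) = sqrt \<gamma> * ?D\<^sup>2 / \<gamma>\<^sup>2"
    using D \<gamma> by (simp add: time_density_def polar_radius_def field_simps power2_eq_square)
  have \<sigma>'_vec: "(\<sigma> has_vector_derivative sqrt \<gamma> * ?D\<^sup>2 / \<gamma>\<^sup>2) (at t)"
    using \<sigma>'[of t] by (simp add: inv_time has_real_derivative_iff_has_vector_derivative)
  show "(conic_point e \<phi> \<gamma> \<circ> \<sigma>) t \<noteq> 0"
    using norm_conic_point[OF e \<gamma> \<sigma>I] r by (metis comp_apply norm_zero order_less_irrefl)
  have "((conic_point e \<phi> \<gamma> \<circ> \<sigma>) has_vector_derivative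
      (sqrt \<gamma> * ?D\<^sup>2 / \<gamma>\<^sup>2) *\<^sub>R ((\<gamma> / ?D\<^sup>2) *\<^sub>R (e * sin \<phi> - sin ?\<theta>, cos ?\<theta> - e * cos \<phi>))) (at t)"
    using D by (intro vector_diff_chain_at[OF \<sigma>'_vec] conic_point_has_derivative) simp
  moreover have "(sqrt \<gamma> * ?D\<^sup>2 / \<gamma>\<^sup>2) * (\<gamma> / ?D\<^sup>2) = 1 / sqrt \<gamma>"
    using D \<gamma> by (simp add: field_simps power2_eq_square)
  ultimately show "((conic_point e \<phi> \<gamma> \<circ> \<sigma>) has_vector_derivative (conic_velocity e \<phi> \<gamma> \<circ> \<sigma>) t) (at t)"
    by (simp only: scaleR_scaleR conic_velocity_def comp_apply)
  have "((conic_velocity e \<phi> \<gamma> \<circ> \<sigma>) has_vector_derivative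
      (sqrt \<gamma> * ?D\<^sup>2 / \<gamma>\<^sup>2) *\<^sub>R ((1 / sqrt \<gamma>) *\<^sub>R (- cos ?\<theta>, - sin ?\<theta>))) (at t)"
    by (intro vector_diff_chain_at[OF \<sigma>'_vec] conic_velocity_has_derivative)
  moreover have "(sqrt \<gamma> * ?D\<^sup>2 / \<gamma>\<^sup>2) *\<^sub>R ((1 / sqrt \<gamma>) *\<^sub>R (- cos ?\<theta>, - sin ?\<theta>))
      = (- (1 / norm (conic_point e \<phi> \<gamma> ?\<theta>) ^ 3)) *\<^sub>R conic_point e \<phi> \<gamma> ?\<theta>"
    using D \<gamma> unfolding norm_conic_point[OF e \<gamma> \<sigma>I]
    by (simp add: conic_point_def polar_radius_def field_simps power2_eq_square power3_eq_cube)
  ultimately show "((conic_velocity e \<phi> \<gamma> \<circ> \<sigma>) has_vector_derivative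
      (- (1 / norm ((conic_point e \<phi> \<gamma> \<circ> \<sigma>) t) ^ 3)) *\<^sub>R (conic_point e \<phi> \<gamma> \<circ> \<sigma>) t) (at t)"
    by simp
qed

lemma conic_orbit:
  assumes e: "e \<ge> 0" and \<gamma>: "\<gamma> > 0" and \<phi>: "0 \<le> \<phi>" "\<phi> < 2*pi"
  obtains q where "ext_solution q" "range q = unifocal (e * cos \<phi>, e * sin \<phi>, \<gamma>)"
proof -
  let ?I = "conic_arc e \<phi>"
  obtain \<tau> where \<tau>': "\<And>\<theta>. \<theta> \<in> ?I \<Longrightarrow> (\<tau> has_real_derivative time_density e \<phi> \<gamma> \<theta>) (at \<theta>)"
    and inj: "inj_on \<tau> ?I" and onto: "\<tau> ` ?I = UNIV"
    using time_along_arc[OF e \<gamma>] by blast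
  define \<sigma> where "\<sigma> = inv_into ?I \<tau>"
  have \<sigma>I: "\<sigma> t \<in> ?I" for t unfolding \<sigma>_def using onto by (metis UNIV_I inv_into_into)
  have \<sigma>': "(\<sigma> has_real_derivative inverse (time_density e \<phi> \<gamma> (\<sigma> t))) (at t)" for t
    unfolding \<sigma>_def using open_conic_arc \<tau>' time_density_pos[OF e \<gamma>] inj onto
    by (intro inv_into_has_real_derivative) (metis less_irrefl)+
  have "range \<sigma> = ?I"
  proof
    show "?I \<subseteq> range \<sigma>"
    proof
      fix \<theta> assume "\<theta> \<in> ?I"
      then have "\<sigma> (\<tau> \<theta>) = \<theta>" using inj by (simp add: \<sigma>_def)
      then show "\<theta> \<in> range \<sigma>" by (metis rangeI)
    qed
  qed (use \<sigma>I in blast)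
  then have "range (conic_point e \<phi> \<gamma> \<circ> \<sigma>) = unifocal (e * cos \<phi>, e * sin \<phi>, \<gamma>)"
    using unifocal_eq_conic_points[OF e \<gamma> \<phi>] by (metis image_comp)
  moreover have "ext_solution (conic_point e \<phi> \<gamma> \<circ> \<sigma>)"
    using conic_motion[OF e \<gamma> \<sigma>I \<sigma>'] ext_solution_if_collision_free by blast
  ultimately show ?thesis using that by blast
qed

section \<open>First integrals\<close>

text \<open>For position \<open>p\<close> and velocity \<open>w\<close>, \<open>cross2 p w\<close> is the angular momentum \<open>C\<close>;
  \<open>alpha_integral\<close>, \<open>beta_integral\<close> are the constants \<open>\<alpha>, \<beta>\<close> of the unifocal equation.\<close>

definition alpha_integral :: "real \<times> real \<Rightarrow> real \<times> real \<Rightarrow> real" where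
  "alpha_integral p w = fst p / norm p - snd w * cross2 p w"

definition beta_integral :: "real \<times> real \<Rightarrow> real \<times> real \<Rightarrow> real" where
  "beta_integral p w = snd p / norm p + fst w * cross2 p w"

lemma unifocal_identity:
  assumes "p \<noteq> 0"
  shows "norm p = alpha_integral p w * fst p + beta_integral p w * snd p + (cross2 p w)\<^sup>2"
proof -
  have "alpha_integral p w * fst p + beta_integral p w * snd p
      = ((fst p)\<^sup>2 + (snd p)\<^sup>2) / norm p - (cross2 p w)\<^sup>2"
    by (simp add: alpha_integral_def beta_integral_def cross2_def algebra_simps
        power2_eq_square add_divide_distrib)
  also have "\<dots> = norm p - (cross2 p w)\<^sup>2"
    using assms by (simp add: norm_pair_square[symmetric]) (simp add: power2_eq_square)
  finally show ?thesis by simp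
qed

lemma in_unifocal_first_integrals:
  "p \<noteq> 0 \<Longrightarrow> p \<in> unifocal (alpha_integral p w, beta_integral p w, (cross2 p w)\<^sup>2)"
  using unifocal_identity[of p w] by (cases p) (simp add: unifocal_iff norm_Pair)

lemma first_integrals_has_derivative:
  assumes "kepler_motion q v S" "t \<in> S"
  shows "((\<lambda>s. cross2 (q s) (v s)) has_real_derivative 0) (at t)"
    and "((\<lambda>s. alpha_integral (q s) (v s)) has_real_derivative 0) (at t)"
    and "((\<lambda>s. beta_integral (q s) (v s)) has_real_derivative 0) (at t)"
proof -
  note nz = kepler_motionD(1)[OF assms] and dq = kepler_motionD(2)[OF assms]
    and dv = kepler_motionD(3)[OF assms]
  define r where "r = norm (q t)"
  have r: "r > 0" using nz by (simp add: r_def)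
  note x = has_vector_derivative_fst_snd(1)[OF dq] and y = has_vector_derivative_fst_snd(2)[OF dq]
  note vx = has_vector_derivative_fst_snd(1)[OF dv] and vy = has_vector_derivative_fst_snd(2)[OF dv]
  note ux = direction_has_real_derivative(1)[OF dq nz] and uy = direction_has_real_derivative(2)[OF dq nz]
  have "((\<lambda>s. cross2 (q s) (v s)) has_real_derivative
      fst (v t) * snd (v t) + fst (q t) * (- (1 / r ^ 3) * snd (q t))
      - (snd (v t) * fst (v t) + snd (q t) * (- (1 / r ^ 3) * fst (q t)))) (at t)"
    unfolding cross2_def r_def by (auto intro!: derivative_eq_intros x y vx vy)
  then show C': "((\<lambda>s. cross2 (q s) (v s)) has_real_derivative 0) (at t)"
    by (simp add: algebra_simps)
  let ?C = "cross2 (q t) (v t)"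
  have "((\<lambda>s. alpha_integral (q s) (v s)) has_real_derivative
      - (snd (q t) / r) * (?C / r\<^sup>2) - (- (1 / r ^ 3) * snd (q t) * ?C + 0 * snd (v t))) (at t)"
    using DERIV_diff[OF ux DERIV_mult[OF vy C']] by (simp add: alpha_integral_def[abs_def] r_def)
  then show "((\<lambda>s. alpha_integral (q s) (v s)) has_real_derivative 0) (at t)"
    using r by (simp add: field_simps power2_eq_square power3_eq_cube)
  have "((\<lambda>s. beta_integral (q s) (v s)) has_real_derivative
      (fst (q t) / r) * (?C / r\<^sup>2) + (- (1 / r ^ 3) * fst (q t) * ?C + 0 * fst (v t))) (at t)"
    using DERIV_add[OF uy DERIV_mult[OF vx C']] by (simp add: beta_integral_def[abs_def] r_def)
  then show "((\<lambda>s. beta_integral (q s) (v s)) has_real_derivative 0) (at t)"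
    using r by (simp add: field_simps power2_eq_square power3_eq_cube)
qed

lemma first_integrals_constant:
  assumes "kepler_motion q v S" "convex S" "s \<in> S" "t \<in> S"
  shows "cross2 (q s) (v s) = cross2 (q t) (v t)"
    and "alpha_integral (q s) (v s) = alpha_integral (q t) (v t)"
    and "beta_integral (q s) (v s) = beta_integral (q t) (v t)"
  using has_field_derivative_zero_constant[OF assms(2), of "\<lambda>s. cross2 (q s) (v s)"]
    has_field_derivative_zero_constant[OF assms(2), of "\<lambda>s. alpha_integral (q s) (v s)"]
    has_field_derivative_zero_constant[OF assms(2), of "\<lambda>s. beta_integral (q s) (v s)"]
    first_integrals_has_derivative[OF assms(1)] assms(3,4)
  by (metis has_field_derivative_at_within)+

section \<open>Collision-free branches are conics\<close>

text \<open>A unit vector \<open>(a, b)\<close> turning with angular speed \<open>h\<close> keeps constant coordinates in the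
  frame rotated by an angle \<open>\<Theta>\<close> with \<open>\<Theta>' = h\<close>, so it stays equal to \<open>(cos \<Theta>, sin \<Theta>)\<close>.\<close>

lemma rotating_unit_vector:
  fixes a b \<Theta> h :: "real \<Rightarrow> real"
  assumes d\<Theta>: "\<And>t. (\<Theta> has_real_derivative h t) (at t)"
    and da: "\<And>t. (a has_real_derivative - b t * h t) (at t)"
    and db: "\<And>t. (b has_real_derivative a t * h t) (at t)"
    and init: "a 0 = cos (\<Theta> 0)" "b 0 = sin (\<Theta> 0)"
  shows "a t = cos (\<Theta> t) \<and> b t = sin (\<Theta> t)"
proof -
  define m where "m t = - sin (\<Theta> t) * a t + cos (\<Theta> t) * b t" for t
  define n where "n t = cos (\<Theta> t) * a t + sin (\<Theta> t) * b t" for t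
  have "(m has_real_derivative 0) (at t)" "(n has_real_derivative 0) (at t)" for t
  proof -
    have "(m has_real_derivative
       - (cos (\<Theta> t) * h t) * a t + - sin (\<Theta> t) * (- b t * h t)
       + ((- sin (\<Theta> t) * h t) * b t + cos (\<Theta> t) * (a t * h t))) (at t)"
      unfolding m_def[abs_def] by (rule derivative_eq_intros d\<Theta> da db refl | simp)+
    then show "(m has_real_derivative 0) (at t)" by (simp add: algebra_simps)
    have "(n has_real_derivative
       (- sin (\<Theta> t) * h t) * a t + cos (\<Theta> t) * (- b t * h t)
       + ((cos (\<Theta> t) * h t) * b t + sin (\<Theta> t) * (a t * h t))) (at t)"
      unfolding n_def[abs_def] by (rule derivative_eq_intros d\<Theta> da db refl | simp)+
    then show "(n has_real_derivative 0) (at t)" by (simp add: algebra_simps)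
  qed
  then have "m t = m 0" "n t = n 0" for t
    by (metis DERIV_isconst_all)+
  then have "m t = 0" "n t = 1" for t
    using init by (simp_all add: m_def n_def algebra_simps flip: power2_eq_square)
  moreover have "a t = cos (\<Theta> t) * n t - sin (\<Theta> t) * m t"
    "b t = sin (\<Theta> t) * n t + cos (\<Theta> t) * m t"
    unfolding m_def n_def
    by (simp_all add: algebra_simps power2_eq_square[symmetric] flip: distrib_left)
  ultimately show ?thesis by simp
qed

lemma polar_angle_lift:
  assumes km: "kepler_motion q v UNIV" and \<theta>0: "sgn (q 0) = (cos \<theta>0, sin \<theta>0)"
  obtains \<Theta> where "\<Theta> 0 = \<theta>0"
    "\<And>t. (\<Theta> has_real_derivative cross2 (q t) (v t) / (norm (q t))\<^sup>2) (at t)"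
    "\<And>t. sgn (q t) = (cos (\<Theta> t), sin (\<Theta> t))"
proof -
  note nz = kepler_motionD(1)[OF km UNIV_I] and dq = kepler_motionD(2)[OF km UNIV_I]
    and dv = kepler_motionD(3)[OF km UNIV_I]
  define h where "h t = cross2 (q t) (v t) / (norm (q t))\<^sup>2" for t
  have "isCont h t" for t
    using nz[of t] has_vector_derivative_continuous[OF dq] has_vector_derivative_continuous[OF dv]
    unfolding h_def cross2_def by (auto intro!: continuous_intros)
  then obtain F where F: "\<And>x::real. (F has_vector_derivative h x) (at x)"
    using einterval_antiderivative[of "-\<infinity>" "\<infinity>" h] by auto
  define \<Theta> where "\<Theta> t = F t - F 0 + \<theta>0" for t
  have d\<Theta>: "(\<Theta> has_real_derivative h t) (at t)" for t
    unfolding \<Theta>_def[abs_def] using F[of t]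
    by (auto intro!: derivative_eq_intros simp: has_real_derivative_iff_has_vector_derivative[symmetric])
  have "fst (q t) / norm (q t) = cos (\<Theta> t) \<and> snd (q t) / norm (q t) = sin (\<Theta> t)" for t
  proof (rule rotating_unit_vector[OF d\<Theta>])
    show "((\<lambda>t. fst (q t) / norm (q t)) has_real_derivative - (snd (q t) / norm (q t)) * h t) (at t)"
      "((\<lambda>t. snd (q t) / norm (q t)) has_real_derivative fst (q t) / norm (q t) * h t) (at t)" for t
      using direction_has_real_derivative[OF dq nz] unfolding h_def by simp_all
  qed (use \<theta>0 in \<open>simp_all add: \<Theta>_def sgn_pair\<close>)
  then show ?thesis
    using that[of \<Theta>] d\<Theta> by (simp add: sgn_pair h_def \<Theta>_def)
qed

lemma stays_in_conic_arc:
  fixes \<Theta> :: "real \<Rightarrow> real"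
  assumes e: "e \<ge> 0" and cont: "continuous_on UNIV \<Theta>"
    and D: "\<And>t. polar_denom e \<phi> (\<Theta> t) > 0" and t0: "\<Theta> t0 \<in> conic_arc e \<phi>"
  shows "\<Theta> t \<in> conic_arc e \<phi>"
proof (cases "e < 1")
  case True then show ?thesis by (simp add: conic_arc_def)
next
  case False
  let ?lo = "\<phi> + arccos (1/e)" and ?hi = "\<phi> + 2*pi - arccos (1/e)"
  have e1: "e \<ge> 1" using False by simp
  have I: "conic_arc e \<phi> = {?lo<..<?hi}" by (rule conic_arc_bounded[OF e1])
  text \<open>The denominator vanishes at both ends of the arc, so \<open>\<Theta>\<close> cannot reach them.\<close>
  have "polar_denom e \<phi> ?lo = 0" "polar_denom e \<phi> ?hi = 0"
    using arccos_inverse(3)[OF e1] by (simp_all add: polar_denom_def)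
  then have ends: "?lo \<notin> range \<Theta>" "?hi \<notin> range \<Theta>"
    using D by (auto simp: image_iff) (metis less_irrefl)+
  have "connected (range \<Theta>)" by (rule connected_continuous_image[OF cont connected_UNIV])
  then have between: "z \<in> range \<Theta>" if "a \<in> range \<Theta>" "b \<in> range \<Theta>" "a \<le> z" "z \<le> b" for a b z
    using that unfolding is_interval_connected_1[symmetric] is_interval_1 by blast
  show ?thesis
  proof (rule ccontr)
    assume "\<Theta> t \<notin> conic_arc e \<phi>"
    then consider "\<Theta> t \<le> ?lo" | "?hi \<le> \<Theta> t" using I by force
    moreover have "?lo < \<Theta> t0" "\<Theta> t0 < ?hi" using t0 I by auto
    ultimately show False
      using between[of "\<Theta> t" "\<Theta> t0" ?lo] between[of "\<Theta> t0" "\<Theta> t" ?hi] ends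
      by (metis rangeI less_imp_le)+
  qed
qed

lemma kepler_motion_polar_form:
  assumes km: "kepler_motion q v UNIV" and C: "cross2 (q 0) (v 0) > 0"
    and \<alpha>: "alpha_integral (q 0) (v 0) = e * cos \<phi>" and \<beta>: "beta_integral (q 0) (v 0) = e * sin \<phi>"
    and e: "e \<ge> 0" and \<phi>: "0 \<le> \<phi>" "\<phi> < 2*pi"
  defines "\<gamma> \<equiv> (cross2 (q 0) (v 0))\<^sup>2"
  obtains \<Theta> where "\<And>t. \<Theta> t \<in> conic_arc e \<phi>" "\<And>t. q t = conic_point e \<phi> \<gamma> (\<Theta> t)"
    "\<And>t. (\<Theta> has_real_derivative cross2 (q 0) (v 0) / (norm (q t))\<^sup>2) (at t)"
proof -
  have \<gamma>: "\<gamma> > 0" using C by (simp add: \<gamma>_def)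
  note nz = kepler_motionD(1)[OF km UNIV_I]
  have const: "cross2 (q t) (v t) = cross2 (q 0) (v 0)"
    "alpha_integral (q t) (v t) = e * cos \<phi>" "beta_integral (q t) (v t) = e * sin \<phi>" for t
    using first_integrals_constant[OF km convex_UNIV UNIV_I UNIV_I, where s = t and t = 0] \<alpha> \<beta>
    by simp_all
  have on_conic: "q t \<in> unifocal (e * cos \<phi>, e * sin \<phi>, \<gamma>)" for t
    using in_unifocal_first_integrals[OF nz[of t], of "v t"] const[of t] by (simp add: \<gamma>_def)
  then obtain \<theta>0 where \<theta>0: "\<theta>0 \<in> conic_arc e \<phi>" "q 0 = conic_point e \<phi> \<gamma> \<theta>0"
    using unifocal_eq_conic_points[OF e \<gamma> \<phi>] by blast
  then have "sgn (q 0) = (cos \<theta>0, sin \<theta>0)"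
    using polar_radius_pos[OF e \<gamma> \<theta>0(1)] sgn_cos_sin
    by (simp only: \<theta>0(2) conic_point_def sgn_scaleR) simp
  then obtain \<Theta> where \<Theta>: "\<Theta> 0 = \<theta>0"
    "\<And>t. (\<Theta> has_real_derivative cross2 (q t) (v t) / (norm (q t))\<^sup>2) (at t)"
    "\<And>t. sgn (q t) = (cos (\<Theta> t), sin (\<Theta> t))"
    using polar_angle_lift[OF km] by blast
  note polar = unifocal_point_polar[OF on_conic \<gamma> \<Theta>(3)]
  have cont: "continuous_on UNIV \<Theta>"
    using \<Theta>(2) by (intro continuous_at_imp_continuous_on ballI) (meson DERIV_isCont)
  have "\<Theta> 0 \<in> conic_arc e \<phi>" using \<Theta>(1) \<theta>0(1) by simp
  from stays_in_conic_arc[OF e cont polar(1) this] have arc: "\<Theta> t \<in> conic_arc e \<phi>" for t .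
  have "(\<Theta> has_real_derivative cross2 (q 0) (v 0) / (norm (q t))\<^sup>2) (at t)" for t
    using \<Theta>(2)[of t] const(1)[of t] by simp
  with arc polar(2) show ?thesis by (rule that)
qed

lemma conic_covered:
  assumes km: "kepler_motion q v UNIV" and C: "cross2 (q 0) (v 0) > 0"
  shows "unifocal (alpha_integral (q 0) (v 0), beta_integral (q 0) (v 0), (cross2 (q 0) (v 0))\<^sup>2)
           \<subseteq> range q"
proof -
  let ?C = "cross2 (q 0) (v 0)"
  define \<gamma> where "\<gamma> = ?C\<^sup>2"
  have \<gamma>: "\<gamma> > 0" and sqrt_\<gamma>: "sqrt \<gamma> = ?C" using C by (simp_all add: \<gamma>_def)
  obtain e \<phi> where e: "e \<ge> 0" and \<phi>: "0 \<le> \<phi>" "\<phi> < 2*pi"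
    and \<alpha>: "alpha_integral (q 0) (v 0) = e * cos \<phi>" and \<beta>: "beta_integral (q 0) (v 0) = e * sin \<phi>"
    by (rule polar_coordinates)
  obtain \<Theta> where arc: "\<And>t. \<Theta> t \<in> conic_arc e \<phi>" and q: "\<And>t. q t = conic_point e \<phi> \<gamma> (\<Theta> t)"
    and \<Theta>': "\<And>t. (\<Theta> has_real_derivative ?C / (norm (q t))\<^sup>2) (at t)"
    using kepler_motion_polar_form[OF km C \<alpha> \<beta> e \<phi>] unfolding \<gamma>_def by blast
  obtain \<tau> where \<tau>': "\<And>\<theta>. \<theta> \<in> conic_arc e \<phi> \<Longrightarrow> (\<tau> has_real_derivative time_density e \<phi> \<gamma> \<theta>) (at \<theta>)"
    and inj: "inj_on \<tau> (conic_arc e \<phi>)" and "\<tau> ` conic_arc e \<phi> = UNIV"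
    using time_along_arc[OF e \<gamma>, where \<phi> = \<phi>] by blast
  text \<open>Kepler's second law: the solution runs along its conic with the speed prescribed by \<open>\<tau>\<close>.\<close>
  have "((\<lambda>t. \<tau> (\<Theta> t)) has_real_derivative 1) (at t)" for t
  proof -
    have "norm (q t) = polar_radius e \<phi> \<gamma> (\<Theta> t)"
      using q[of t] norm_conic_point[OF e \<gamma> arc] by simp
    then have unit: "time_density e \<phi> \<gamma> (\<Theta> t) * (?C / (norm (q t))\<^sup>2) = 1"
      using polar_radius_pos[OF e \<gamma> arc, of t] C by (simp add: time_density_def sqrt_\<gamma>)
    show ?thesis using DERIV_chain2[OF \<tau>'[OF arc[of t]] \<Theta>'[of t]] unfolding unit .
  qed
  then have "((\<lambda>t. \<tau> (\<Theta> t) - t) has_real_derivative 0) (at t)" for t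
    using DERIV_diff[OF _ DERIV_ident] by fastforce
  then have "\<tau> (\<Theta> t) - t = \<tau> (\<Theta> 0) - 0" for t by (rule DERIV_isconst_all[rule_format])
  then obtain k where k: "\<And>t. \<tau> (\<Theta> t) = t + k" by (metis diff_zero diff_add_cancel add.commute)
  show ?thesis
  proof
    fix p assume "p \<in> unifocal (alpha_integral (q 0) (v 0), beta_integral (q 0) (v 0), ?C\<^sup>2)"
    then obtain \<theta> where \<theta>: "\<theta> \<in> conic_arc e \<phi>" "p = conic_point e \<phi> \<gamma> \<theta>"
      using unifocal_eq_conic_points[OF e \<gamma> \<phi>] \<alpha> \<beta> by (auto simp: \<gamma>_def)
    have "\<tau> (\<Theta> (\<tau> \<theta> - k)) = \<tau> \<theta>" using k by simp
    then have "\<Theta> (\<tau> \<theta> - k) = \<theta>" by (rule inj_onD[OF inj _ arc \<theta>(1)])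
    then have "q (\<tau> \<theta> - k) = p" using q \<theta>(2) by simp
    then show "p \<in> range q" by (rule range_eqI[OF sym])
  qed
qed

lemma kepler_motion_reverse:
  assumes "kepler_motion q v UNIV"
  shows "kepler_motion (\<lambda>t. q (- t)) (\<lambda>t. - v (- t)) UNIV"
  unfolding kepler_motion_def
proof (intro ballI conjI)
  fix t :: real
  note nz = kepler_motionD(1)[OF assms UNIV_I, of "- t"] and dq = kepler_motionD(2)[OF assms UNIV_I, of "- t"]
    and dv = kepler_motionD(3)[OF assms UNIV_I, of "- t"]
  show "q (- t) \<noteq> 0" by (rule nz)
  have m: "(uminus has_vector_derivative - 1) (at t)" for t :: real
    by (auto intro!: derivative_eq_intros simp: has_real_derivative_iff_has_vector_derivative[symmetric])
  show "((\<lambda>t. q (- t)) has_vector_derivative - v (- t)) (at t)"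
    using vector_diff_chain_at[OF m dq] by (simp add: o_def)
  show "((\<lambda>t. - v (- t)) has_vector_derivative (- (1 / norm (q (- t)) ^ 3)) *\<^sub>R q (- t)) (at t)"
    using has_vector_derivative_minus[OF vector_diff_chain_at[OF m dv]] by (simp add: o_def)
qed

lemma collision_free_branch:
  assumes km: "kepler_motion q v UNIV" and not_line: "\<not> (\<exists>p u. u \<noteq> 0 \<and> range q \<subseteq> line2 p u)"
  shows "\<exists>P\<in>Hspace. unifocal P = range q"
proof -
  note nz = kepler_motionD(1)[OF km UNIV_I]
  let ?C = "cross2 (q 0) (v 0)" and ?A = "alpha_integral (q 0) (v 0)" and ?B = "beta_integral (q 0) (v 0)"
  note const = first_integrals_constant[OF km convex_UNIV UNIV_I UNIV_I, where t = 0]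
  have C: "?C \<noteq> 0"
  proof
    assume C0: "?C = 0"
    text \<open>Without angular momentum the direction \<open>sgn (q t) = (\<alpha>, \<beta>)\<close> is constant.\<close>
    have dir: "sgn (q t) = (?A, ?B)" for t
      using const[of t] C0 by (simp add: sgn_pair alpha_integral_def beta_integral_def)
    have "q t \<in> line2 0 (?A, ?B)" for t
      unfolding line2_def using nz[of t]
      by (intro CollectI exI[of _ "norm (q t)"]) (simp add: dir[of t, symmetric] sgn_div_norm)
    moreover have "(?A, ?B) \<noteq> 0" using dir[of 0, symmetric] nz[of 0] by (simp add: sgn_zero_iff)
    ultimately show False using not_line by blast
  qed
  have "range q \<subseteq> unifocal (?A, ?B, ?C\<^sup>2)"
    using in_unifocal_first_integrals[OF nz] const by (metis image_subsetI)
  moreover have "unifocal (?A, ?B, ?C\<^sup>2) \<subseteq> range q"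
  proof (cases "?C > 0")
    case True
    then show ?thesis by (rule conic_covered[OF km])
  next
    case False
    text \<open>Reversing time changes the sign of \<open>C\<close> but neither \<open>\<alpha>\<close>, \<open>\<beta>\<close> nor the branch.\<close>
    let ?q = "\<lambda>t. q (- t)" and ?v = "\<lambda>t. - v (- t)"
    have "unifocal (?A, ?B, (- ?C)\<^sup>2) \<subseteq> range ?q"
      using conic_covered[OF kepler_motion_reverse[OF km]] False C
      by (simp add: cross2_def alpha_integral_def beta_integral_def algebra_simps)
    moreover have "range ?q = range q" by (metis surj_def minus_minus image_image range_composition)
    ultimately show ?thesis by simp
  qed
  moreover have "(?A, ?B, ?C\<^sup>2) \<in> Hspace" using C by (simp add: Hspace_def)
  ultimately show ?thesis by blast
qed

section \<open>Motions with a collision are rectilinear\<close>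

lemma ext_solution_continuous: "ext_solution q \<Longrightarrow> continuous_on UNIV q"
  by (simp add: ext_solution_def)

lemma ext_solution_finite_collisions: "ext_solution q \<Longrightarrow> finite {t \<in> {a..b}. q t = 0}"
  by (simp add: ext_solution_def)

lemma ext_solution_kepler_motion:
  assumes "ext_solution q"
  obtains v where "\<And>S. (\<And>t. t \<in> S \<Longrightarrow> q t \<noteq> 0) \<Longrightarrow> kepler_motion q v S"
  using assms unfolding ext_solution_def kepler_motion_def by metis

lemma ext_solution_bounce:
  assumes "ext_solution q" "q t0 = 0"
  obtains e where "e > 0" "\<And>s. 0 < s \<Longrightarrow> s < e \<Longrightarrow>
    q (t0 + s) \<noteq> 0 \<and> q (t0 - s) \<noteq> 0 \<and> (\<exists>c>0. q (t0 + s) = c *\<^sub>R q (t0 - s))"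
  using assms unfolding ext_solution_def by metis

lemma ext_solution_nonzero_near:
  assumes "ext_solution q" "e > 0"
  obtains s where "\<bar>s - t\<bar> < e" "q s \<noteq> 0"
proof -
  have "infinite {t - e/2..t + e/2}" using assms(2) by (intro infinite_Icc) simp
  then obtain s where "s \<in> {t - e/2..t + e/2}" "q s \<noteq> 0"
    using ext_solution_finite_collisions[OF assms(1)] by (metis (mono_tags, lifting) finite_subset mem_Collect_eq subsetI)
  then show ?thesis using assms(2) by (intro that[of s]) (auto simp: abs_less_iff)
qed

text \<open>If the motion tends to the collision along \<open>F\<close>, then \<open>C\<^sup>2 = r - \<alpha> x - \<beta> y\<close> tends to \<open>0\<close>;
  with \<open>C = 0\<close> the direction \<open>sgn q = (\<alpha>, \<beta>)\<close> is constant.\<close>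

lemma direction_constant_if_collision:
  assumes km: "kepler_motion q v S" and S: "convex S"
    and F: "F \<noteq> bot" "eventually (\<lambda>s. s \<in> S) F" and lim: "(q \<longlongrightarrow> 0) F"
  obtains w where "\<And>s. s \<in> S \<Longrightarrow> sgn (q s) = w"
proof -
  obtain s0 where s0: "s0 \<in> S" using F eventually_happens' by blast
  let ?C = "cross2 (q s0) (v s0)" and ?A = "alpha_integral (q s0) (v s0)"
    and ?B = "beta_integral (q s0) (v s0)"
  note const = first_integrals_constant[OF km S _ s0]
  have on_S: "norm (q s) - ?A * fst (q s) - ?B * snd (q s) = ?C\<^sup>2" if "s \<in> S" for s
    using unifocal_identity[OF kepler_motionD(1)[OF km that], of "v s"] const[OF that] by simp
  have "((\<lambda>s. norm (q s) - ?A * fst (q s) - ?B * snd (q s)) \<longlongrightarrow> ?C\<^sup>2) F"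
    by (rule Lim_transform_eventually[OF tendsto_const]) (use F(2) on_S in \<open>auto elim: eventually_mono\<close>)
  moreover have "((\<lambda>s. norm (q s) - ?A * fst (q s) - ?B * snd (q s)) \<longlongrightarrow>
      norm (0::real \<times> real) - ?A * fst (0::real \<times> real) - ?B * snd (0::real \<times> real)) F"
    by (intro tendsto_intros lim)
  ultimately have "?C = 0" using tendsto_unique[OF F(1)] by fastforce
  then have "sgn (q s) = (?A, ?B)" if "s \<in> S" for s
    using const[OF that] by (simp add: sgn_pair alpha_integral_def beta_integral_def)
  then show ?thesis using that by blast
qed

lemma direction_constant_on_gap:
  assumes es: "ext_solution q" and "c < d" and end0: "q c = 0 \<or> q d = 0"
    and gap: "\<And>s. s \<in> {c<..<d} \<Longrightarrow> q s \<noteq> 0"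
  obtains w where "\<And>s. s \<in> {c<..<d} \<Longrightarrow> sgn (q s) = w"
proof -
  obtain v where "kepler_motion q v {c<..<d}"
    using ext_solution_kepler_motion[OF es] gap by metis
  note km = this
  have lim: "(q \<longlongrightarrow> 0) (at x within X)" if "q x = 0" for x X
    using ext_solution_continuous[OF es] that
    by (metis continuous_on_eq_continuous_within continuous_within UNIV_I continuous_within_subset subset_UNIV)
  show ?thesis
  proof (cases "q c = 0")
    case True
    show ?thesis
      by (rule direction_constant_if_collision[OF km _ _ _ lim[OF True, of "{c<..}"]])
         (use that \<open>c < d\<close> eventually_at_right_real in auto)
  next
    case False
    then have "q d = 0" using end0 by simp
    show ?thesis
      by (rule direction_constant_if_collision[OF km _ _ _ lim[OF \<open>q d = 0\<close>, of "{..<d}"]])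
         (use that \<open>c < d\<close> eventually_at_left_real in auto)
  qed
qed

lemma collision_gap_around:
  assumes es: "ext_solution q" and col: "q t0 = 0" and nz: "q t \<noteq> 0"
  obtains c d where "c < t" "t < d" "q c = 0 \<or> q d = 0" "\<And>s. s \<in> {c<..<d} \<Longrightarrow> q s \<noteq> 0"
proof -
  have "isCont q t" using ext_solution_continuous[OF es] by (simp add: continuous_on_eq_continuous_at)
  obtain \<delta> where \<delta>: "\<delta> > 0" "\<And>s. dist t s < \<delta> \<Longrightarrow> q s \<noteq> 0"
    using continuous_at_avoid[OF \<open>isCont q t\<close> nz] by blast
  then have \<delta>': "q s \<noteq> 0" if "\<bar>s - t\<bar> < \<delta>" for s
    using that by (simp add: dist_real_def abs_minus_commute)
  have "t0 \<noteq> t" using col nz by auto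
  then consider "t0 < t" | "t < t0" by linarith
  then show ?thesis
  proof cases
    case 1
    define Z where "Z = {s \<in> {t0..t}. q s = 0}"
    have "finite Z" "t0 \<in> Z" unfolding Z_def using ext_solution_finite_collisions[OF es] col 1 by auto
    then have c: "Max Z \<in> Z" "\<And>s. s \<in> Z \<Longrightarrow> s \<le> Max Z" by (auto intro: Max_in)
    then have "Max Z < t" "q (Max Z) = 0" using nz by (auto simp: Z_def order.order_iff_strict)
    moreover have "q s \<noteq> 0" if s: "s \<in> {Max Z<..<t + \<delta>}" for s
    proof (cases "s \<le> t")
      case True
      have "s \<notin> Z" using s c(2) by force
      then show ?thesis using True s c(1) by (auto simp: Z_def)
    qed (use s \<delta>' in auto)
    ultimately show ?thesis using that[of "Max Z" "t + \<delta>"] \<delta>(1) by auto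
  next
    case 2
    define Z where "Z = {s \<in> {t..t0}. q s = 0}"
    have "finite Z" "t0 \<in> Z" unfolding Z_def using ext_solution_finite_collisions[OF es] col 2 by auto
    then have d: "Min Z \<in> Z" "\<And>s. s \<in> Z \<Longrightarrow> Min Z \<le> s" by (auto intro: Min_in)
    then have "t < Min Z" "q (Min Z) = 0" using nz by (auto simp: Z_def order.order_iff_strict)
    moreover have "q s \<noteq> 0" if s: "s \<in> {t - \<delta><..<Min Z}" for s
    proof (cases "t \<le> s")
      case True
      have "s \<notin> Z" using s d(2) by force
      then show ?thesis using True s d(1) by (auto simp: Z_def)
    qed (use s \<delta>' in auto)
    ultimately show ?thesis using that[of "t - \<delta>" "Min Z"] \<delta>(1) by auto
  qed
qed

definition direction_near :: "(real \<Rightarrow> real \<times> real) \<Rightarrow> real \<Rightarrow> real \<times> real \<Rightarrow> bool" where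
  "direction_near q t w \<longleftrightarrow> (\<exists>e>0. \<forall>s. \<bar>s - t\<bar> < e \<longrightarrow> q s \<noteq> 0 \<longrightarrow> sgn (q s) = w)"

lemma direction_locally_constant:
  assumes es: "ext_solution q" and col: "q t0 = 0"
  shows "\<exists>w. direction_near q t w"
  unfolding direction_near_def
proof (cases "q t = 0")
  case True
  obtain e where e: "e > 0" and bounce: "\<And>s. 0 < s \<Longrightarrow> s < e \<Longrightarrow>
      q (t + s) \<noteq> 0 \<and> q (t - s) \<noteq> 0 \<and> (\<exists>c>0. q (t + s) = c *\<^sub>R q (t - s))"
    using ext_solution_bounce[OF es True] by blast
  have gap1: "q s \<noteq> 0" if "s \<in> {t<..<t + e}" for s using bounce[of "s - t"] that by auto
  have gap2: "q s \<noteq> 0" if "s \<in> {t - e<..<t}" for s using bounce[of "t - s"] that by auto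
  have "t < t + e" "t - e < t" using e by simp_all
  obtain w1 where w1: "\<And>s. s \<in> {t<..<t + e} \<Longrightarrow> sgn (q s) = w1"
    using direction_constant_on_gap[OF es \<open>t < t + e\<close> disjI1[OF True] gap1] by blast
  obtain w2 where w2: "\<And>s. s \<in> {t - e<..<t} \<Longrightarrow> sgn (q s) = w2"
    using direction_constant_on_gap[OF es \<open>t - e < t\<close> disjI2[OF True] gap2] by blast
  text \<open>The bounce keeps the ray, so both sides of the collision have the same direction.\<close>
  obtain c where "c > 0" "q (t + e/2) = c *\<^sub>R q (t - e/2)" using bounce[of "e/2"] e by auto
  then have "w1 = w2" using w1[of "t + e/2"] w2[of "t - e/2"] e by (simp add: sgn_scaleR)
  have "sgn (q s) = w1" if s: "\<bar>s - t\<bar> < e" "q s \<noteq> 0" for s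
  proof -
    have "s \<noteq> t" using s True by auto
    then consider "s \<in> {t<..<t + e}" | "s \<in> {t - e<..<t}" using s(1) by (fastforce simp: abs_less_iff)
    then show ?thesis using w1 w2 \<open>w1 = w2\<close> by cases auto
  qed
  then show "\<exists>w e. e > 0 \<and> (\<forall>s. \<bar>s - t\<bar> < e \<longrightarrow> q s \<noteq> 0 \<longrightarrow> sgn (q s) = w)" using e by blast
next
  case False
  obtain c d where cd: "c < t" "t < d" "q c = 0 \<or> q d = 0" "\<And>s. s \<in> {c<..<d} \<Longrightarrow> q s \<noteq> 0"
    using collision_gap_around[OF es col False] by blast
  have "c < d" using cd by simp
  obtain w where "\<And>s. s \<in> {c<..<d} \<Longrightarrow> sgn (q s) = w"
    using direction_constant_on_gap[OF es \<open>c < d\<close> cd(3,4)] by blast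
  then have "\<forall>s. \<bar>s - t\<bar> < min (t - c) (d - t) \<longrightarrow> q s \<noteq> 0 \<longrightarrow> sgn (q s) = w"
    by (auto simp: abs_less_iff)
  then show "\<exists>w e. e > 0 \<and> (\<forall>s. \<bar>s - t\<bar> < e \<longrightarrow> q s \<noteq> 0 \<longrightarrow> sgn (q s) = w)"
    using cd(1,2) by (intro exI[of _ w] exI[of _ "min (t - c) (d - t)"]) simp
qed

text \<open>Collisions are isolated, so the direction near \<open>t\<close> is determined by \<open>t\<close>.\<close>

lemma direction_near_unique:
  assumes es: "ext_solution q" and "direction_near q t w" "direction_near q t w'"
  shows "w = w'"
proof -
  obtain e where "e > 0" "\<And>s. \<bar>s - t\<bar> < e \<Longrightarrow> q s \<noteq> 0 \<Longrightarrow> sgn (q s) = w"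
    using assms(2) unfolding direction_near_def by blast
  moreover obtain e' where "e' > 0" "\<And>s. \<bar>s - t\<bar> < e' \<Longrightarrow> q s \<noteq> 0 \<Longrightarrow> sgn (q s) = w'"
    using assms(3) unfolding direction_near_def by blast
  moreover obtain s where "\<bar>s - t\<bar> < min e e'" "q s \<noteq> 0"
    using ext_solution_nonzero_near[OF es, of "min e e'"] \<open>e > 0\<close> \<open>e' > 0\<close> by auto
  ultimately show ?thesis by force
qed

lemma direction_near_neighbourhood:
  assumes "direction_near q t w"
  obtains e where "e > 0" "\<And>y. dist y t < e \<Longrightarrow> direction_near q y w"
proof -
  obtain e where e: "e > 0" "\<And>s. \<bar>s - t\<bar> < e \<Longrightarrow> q s \<noteq> 0 \<Longrightarrow> sgn (q s) = w"
    using assms unfolding direction_near_def by blast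
  have "direction_near q y w" if "dist y t < e" for y
    unfolding direction_near_def using that e
    by (intro exI[of _ "e - dist y t"]) (auto simp: dist_real_def)
  then show ?thesis using e(1) that by blast
qed

lemma collision_rectilinear:
  assumes es: "ext_solution q" and col: "q t0 = 0"
  obtains u where "u \<noteq> 0" "range q \<subseteq> line2 0 u"
proof -
  define dir where "dir t = (SOME w. direction_near q t w)" for t
  have dir: "direction_near q t (dir t)" for t
    unfolding dir_def using direction_locally_constant[OF es col] by (rule someI_ex)
  have "\<forall>\<^sub>F y in at t. dir t = dir y" for t
  proof -
    obtain e where "e > 0" "\<And>y. dist y t < e \<Longrightarrow> direction_near q y (dir t)"
      using direction_near_neighbourhood[OF dir] by blast
    then show ?thesis
      unfolding eventually_at using direction_near_unique[OF es _ dir] by blast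
  qed
  then have const: "dir t = dir t0" for t
    by (intro connected_local_const[where A = UNIV]) auto
  have on_line: "q t = norm (q t) *\<^sub>R dir t0" if "q t \<noteq> 0" for t
  proof -
    have "sgn (q t) = dir t0" using dir[of t] that const unfolding direction_near_def by force
    moreover have "q t = norm (q t) *\<^sub>R sgn (q t)" using that by (simp add: sgn_div_norm)
    ultimately show ?thesis by simp
  qed
  obtain t1 where "q t1 \<noteq> 0" using ext_solution_nonzero_near[OF es, of 1] by auto
  then have "dir t0 \<noteq> 0" using on_line by fastforce
  moreover have "range q \<subseteq> line2 0 (dir t0)"
    unfolding line2_def using on_line by (fastforce intro: exI[of _ 0])
  ultimately show ?thesis using that by blast
qed

lemma irreducible_branch_unifocal:
  assumes "K \<in> IrrBranches"
  obtains P where "P \<in> Hspace" "unifocal P = K"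
proof -
  obtain q where es: "ext_solution q" and K: "K = range q"
    using assms unfolding IrrBranches_def irreducible_branch_def kep_branch_def by blast
  have not_line: "\<not> (\<exists>p u. u \<noteq> 0 \<and> range q \<subseteq> line2 p u)"
    using assms K unfolding IrrBranches_def irreducible_branch_def by blast
  then have "q t \<noteq> 0" for t using collision_rectilinear[OF es] by metis
  moreover obtain v where "\<And>S. (\<And>t. t \<in> S \<Longrightarrow> q t \<noteq> 0) \<Longrightarrow> kepler_motion q v S"
    using ext_solution_kepler_motion[OF es] by blast
  ultimately have "kepler_motion q v UNIV" by blast
  then show ?thesis using collision_free_branch[OF _ not_line] K that by blast
qed

section \<open>The parameters of a branch\<close>

lemma inner_triple: "(a, b, c) \<bullet> (x, y, z) = a * x + b * y + c * z" for a b c x y z :: real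
  by (simp add: inner_Pair)

lemma mem_unifocal_iff_inner: "A \<in> unifocal P \<longleftrightarrow> (fst A, snd A, 1) \<bullet> P = norm A"
proof -
  obtain a1 a2 where A: "A = (a1, a2)" by (cases A)
  obtain x y z where P: "P = (x, y, z)" by (cases P) auto
  show ?thesis unfolding A P unifocal_iff inner_triple norm_pair_eq by (auto simp: algebra_simps)
qed

lemma cross2_line_points:
  assumes "{A, B, C} \<subseteq> line2 p u"
  shows "cross2 (B - A) (C - A) = 0"
proof -
  have on_line: "\<exists>a. X = p + a *\<^sub>R u" if "X \<in> {A, B, C}" for X
    using assms that unfolding line2_def by blast
  obtain a b c where "A = p + a *\<^sub>R u" "B = p + b *\<^sub>R u" "C = p + c *\<^sub>R u"
    using on_line[of A] on_line[of B] on_line[of C] by auto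
  then have "B - A = (b - a) *\<^sub>R u" "C - A = (c - a) *\<^sub>R u" by (simp_all add: scaleR_diff_left)
  then show ?thesis by (simp add: cross2_def)
qed

lemma eq_zero_if_three_equations:
  fixes X :: "real \<times> real \<times> real"
  assumes "cross2 (B - A) (C - A) \<noteq> 0"
    and "(fst A, snd A, 1) \<bullet> X = 0" "(fst B, snd B, 1) \<bullet> X = 0" "(fst C, snd C, 1) \<bullet> X = 0"
  shows "X = 0"
proof -
  obtain x y z where X: "X = (x, y, z)" by (cases X) auto
  let ?d = "cross2 (B - A) (C - A)"
  have "x * (fst B - fst A) + y * (snd B - snd A) = 0" "x * (fst C - fst A) + y * (snd C - snd A) = 0"
    using assms(2-4) by (auto simp: X inner_triple algebra_simps)
  then have "?d * x = 0" "?d * y = 0" unfolding cross2_def fst_diff snd_diff by algebra+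
  then have "x = 0" "y = 0" using assms(1) by simp_all
  then show ?thesis using assms(2) by (simp add: X inner_triple zero_prod_def)
qed

text \<open>The witnesses are the vertex of the conic and the two ends of its latus rectum.\<close>

lemma unifocal_three_points:
  assumes "P \<in> Hspace"
  obtains A B C where "{A, B, C} \<subseteq> unifocal P" "cross2 (B - A) (C - A) \<noteq> 0"
proof -
  obtain a b \<gamma> where P: "P = (a, b, \<gamma>)" and \<gamma>: "\<gamma> > 0" using assms by (cases P) (auto simp: Hspace_def)
  obtain e \<phi> where e: "e \<ge> 0" and ab: "a = e * cos \<phi>" "b = e * sin \<phi>" by (rule polar_coordinates)
  let ?c = "cos \<phi>" and ?s = "sin \<phi>" and ?k = "\<gamma> / (1 + e)"
  have k: "?k > 0" using e \<gamma> by simp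
  have sc: "?s\<^sup>2 + ?c\<^sup>2 = 1" by simp
  have norm_scaled: "sqrt ((r * u)\<^sup>2 + (r * w)\<^sup>2) = \<bar>r\<bar>" if "u\<^sup>2 + w\<^sup>2 = 1" for r u w :: real
    using that by (simp add: power_mult_distrib flip: distrib_left)
  have A: "(- \<gamma> * ?s, \<gamma> * ?c) \<in> unifocal P" and B: "(\<gamma> * ?s, - \<gamma> * ?c) \<in> unifocal P"
    using norm_scaled[OF sc, of \<gamma>] norm_scaled[OF sc, of "- \<gamma>"] \<gamma>
    by (auto simp: P ab unifocal_iff algebra_simps)
  have C: "(- ?k * ?c, - ?k * ?s) \<in> unifocal P"
  proof -
    have "e * ?c * (- ?k * ?c) + e * ?s * (- ?k * ?s) = - e * ?k * (?c * ?c + ?s * ?s)"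
      by algebra
    also have "\<dots> = - e * ?k" by (simp only: sin_cos_squared_add3 mult_1_right)
    also have "\<dots> = ?k - \<gamma>" using e by (simp add: field_simps)
    finally have "e * ?c * (- ?k * ?c) + e * ?s * (- ?k * ?s) + \<gamma> = ?k" by simp
    then show ?thesis
      using norm_scaled[of ?c ?s "- ?k"] k e \<gamma> by (simp add: P ab unifocal_iff add.commute)
  qed
  have "cross2 ((\<gamma> * ?s, - \<gamma> * ?c) - (- \<gamma> * ?s, \<gamma> * ?c)) ((- ?k * ?c, - ?k * ?s) - (- \<gamma> * ?s, \<gamma> * ?c))
      = - 2 * \<gamma> * ?k * (?c * ?c + ?s * ?s)"
    unfolding cross2_def fst_diff snd_diff fst_conv snd_conv by algebra
  also have "\<dots> = - 2 * \<gamma> * ?k" by (simp only: sin_cos_squared_add3 mult_1_right)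
  finally have "cross2 ((\<gamma> * ?s, - \<gamma> * ?c) - (- \<gamma> * ?s, \<gamma> * ?c)) ((- ?k * ?c, - ?k * ?s) - (- \<gamma> * ?s, \<gamma> * ?c))
      \<noteq> 0" using \<gamma> e by simp
  then show ?thesis by (rule that[rotated]) (use A B C in blast)
qed

lemma unifocal_inj:
  assumes "P \<in> Hspace" "unifocal P = unifocal P'"
  shows "P = P'"
proof -
  obtain A B C where ABC: "{A, B, C} \<subseteq> unifocal P" "cross2 (B - A) (C - A) \<noteq> 0"
    using unifocal_three_points[OF assms(1)] by blast
  have "(fst X, snd X, 1) \<bullet> (P - P') = 0" if "X \<in> {A, B, C}" for X
    using ABC(1) assms(2) that by (auto simp: mem_unifocal_iff_inner inner_diff_right)
  then have "P - P' = 0" by (intro eq_zero_if_three_equations[OF ABC(2)]) auto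
  then show ?thesis by simp
qed

lemma unifocal_not_in_line:
  assumes "P \<in> Hspace" "u \<noteq> 0"
  shows "\<not> unifocal P \<subseteq> line2 p u"
proof
  assume "unifocal P \<subseteq> line2 p u"
  moreover obtain A B C where "{A, B, C} \<subseteq> unifocal P" "cross2 (B - A) (C - A) \<noteq> 0"
    using unifocal_three_points[OF assms(1)] by blast
  ultimately show False using cross2_line_points by blast
qed

lemma unifocal_in_IrrBranches:
  assumes "P \<in> Hspace"
  shows "unifocal P \<in> IrrBranches"
proof -
  obtain a b \<gamma> where P: "P = (a, b, \<gamma>)" and \<gamma>: "\<gamma> > 0" using assms by (cases P) (auto simp: Hspace_def)
  obtain e \<phi> where e: "e \<ge> 0" "0 \<le> \<phi>" "\<phi> < 2*pi" and ab: "a = e * cos \<phi>" "b = e * sin \<phi>"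
    by (rule polar_coordinates)
  obtain q where "ext_solution q" "range q = unifocal P"
    using conic_orbit[OF e(1) \<gamma> e(2,3)] P ab by metis
  then have "kep_branch (unifocal P)" unfolding kep_branch_def by blast
  then show ?thesis using unifocal_not_in_line[OF assms]
    unfolding IrrBranches_def irreducible_branch_def by blast
qed

lemma branch_params_unifocal:
  assumes "P \<in> Hspace"
  shows "branch_params (unifocal P) = P"
  unfolding branch_params_def by (rule the_equality) (use assms unifocal_inj in auto)

lemma branch_params_irreducible:
  assumes "K \<in> IrrBranches"
  shows "branch_params K \<in> Hspace" "unifocal (branch_params K) = K"
proof -
  obtain P where P: "P \<in> Hspace" "unifocal P = K" using irreducible_branch_unifocal[OF assms] .
  then have "branch_params K = P" using branch_params_unifocal[OF P(1)] by simp
  then show "branch_params K \<in> Hspace" "unifocal (branch_params K) = K" using P by simp_all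
qed

lemma bij_branch_params: "bij_betw branch_params IrrBranches Hspace"
proof (rule bij_betw_byWitness[where f' = unifocal])
  show "\<forall>K\<in>IrrBranches. unifocal (branch_params K) = K" "\<forall>P\<in>Hspace. branch_params (unifocal P) = P"
    using branch_params_irreducible(2) branch_params_unifocal by auto
  show "branch_params ` IrrBranches \<subseteq> Hspace" "unifocal ` Hspace \<subseteq> IrrBranches"
    using branch_params_irreducible(1) unifocal_in_IrrBranches by auto
qed

lemma branch_params_image_Collect:
  "branch_params ` {K \<in> IrrBranches. Q K} = {P \<in> Hspace. Q (unifocal P)}"
proof (intro set_eqI iffI)
  fix P assume P: "P \<in> {P \<in> Hspace. Q (unifocal P)}"
  show "P \<in> branch_params ` {K \<in> IrrBranches. Q K}"
  proof (rule image_eqI)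
    show "P = branch_params (unifocal P)" using P branch_params_unifocal by simp
    show "unifocal P \<in> {K \<in> IrrBranches. Q K}" using P unifocal_in_IrrBranches by simp
  qed
qed (use branch_params_irreducible in auto)

section \<open>Branches through given points\<close>

lemma branch_params_through_point:
  "branch_params ` {K \<in> IrrBranches. A \<in> K} = Hspace \<inter> plane3 (fst A, snd A, 1) (norm A)"
  unfolding branch_params_image_Collect plane3_def mem_unifocal_iff_inner by auto

lemma plane_through_point:
  assumes "A \<noteq> 0"
  shows "plane3 (fst A, snd A, 1) (norm A) \<inter> Hboundary \<noteq> {}"
    and "plane3 (fst A, snd A, 1) (norm A) \<noteq> Hboundary"
proof -
  have "(fst A, snd A, 1) \<bullet> (fst A / norm A, snd A / norm A, 0) = ((fst A)\<^sup>2 + (snd A)\<^sup>2) / norm A"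
    by (simp add: inner_triple power2_eq_square add_divide_distrib)
  also have "\<dots> = norm A" using assms by (simp add: norm_pair_square[symmetric]) (simp add: power2_eq_square)
  finally have "(fst A / norm A, snd A / norm A, 0) \<in> plane3 (fst A, snd A, 1) (norm A) \<inter> Hboundary"
    by (simp add: plane3_def Hboundary_def)
  then show "plane3 (fst A, snd A, 1) (norm A) \<inter> Hboundary \<noteq> {}" by blast
  have "(0, 0, 0) \<in> Hboundary" "(0, 0, 0) \<notin> plane3 (fst A, snd A, 1) (norm A)"
    using assms by (auto simp: Hboundary_def plane3_def)
  then show "plane3 (fst A, snd A, 1) (norm A) \<noteq> Hboundary" by blast
qed

definition cross_triple :: "real \<times> real \<times> real \<Rightarrow> real \<times> real \<times> real \<Rightarrow> real \<times> real \<times> real" where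
  "cross_triple a b = (case a of (a1, a2, a3) \<Rightarrow> case b of (b1, b2, b3) \<Rightarrow>
     (a2 * b3 - a3 * b2, a3 * b1 - a1 * b3, a1 * b2 - a2 * b1))"

lemma cross_triple_Pair [simp]:
  "cross_triple (a1, a2, a3) (b1, b2, b3) = (a2 * b3 - a3 * b2, a3 * b1 - a1 * b3, a1 * b2 - a2 * b1)"
  by (simp add: cross_triple_def)

lemma lagrange_identity: "(a \<bullet> a) * (b \<bullet> b) - (a \<bullet> b)\<^sup>2 = cross_triple a b \<bullet> cross_triple a b"
proof -
  obtain a1 a2 a3 b1 b2 b3 where ab: "a = (a1, a2, a3)" "b = (b1, b2, b3)" by (metis prod.collapse)
  show ?thesis unfolding ab by (simp add: inner_triple) algebra
qed

lemma inner_cross_triple: "a \<bullet> cross_triple a b = 0" "b \<bullet> cross_triple a b = 0"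
proof -
  obtain a1 a2 a3 b1 b2 b3 where ab: "a = (a1, a2, a3)" "b = (b1, b2, b3)" by (metis prod.collapse)
  show "a \<bullet> cross_triple a b = 0" "b \<bullet> cross_triple a b = 0"
    unfolding ab by (simp_all add: inner_triple algebra_simps)
qed

lemma orthogonal_to_both_parallel_cross_triple:
  assumes "a \<bullet> w = 0" "b \<bullet> w = 0"
  shows "(cross_triple a b \<bullet> cross_triple a b) *\<^sub>R w = (cross_triple a b \<bullet> w) *\<^sub>R cross_triple a b"
proof -
  obtain a1 a2 a3 b1 b2 b3 w1 w2 w3 where abw: "a = (a1, a2, a3)" "b = (b1, b2, b3)" "w = (w1, w2, w3)"
    by (metis prod.collapse)
  show ?thesis using assms unfolding abw by (simp add: inner_triple) (intro conjI; algebra)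
qed

lemma plane3_inter_eq_line3:
  assumes "cross_triple a b \<noteq> 0"
  obtains P0 where "plane3 a r \<inter> plane3 b s = line3 P0 (cross_triple a b)"
proof -
  let ?V = "cross_triple a b"
  define \<Delta> where "\<Delta> = ?V \<bullet> ?V"
  have "\<Delta> > 0" using assms by (simp add: \<Delta>_def)
  text \<open>A point of the line in the span of the normals, by Cramer's rule on the Gram system.\<close>
  define l where "l = (r * (b \<bullet> b) - s * (a \<bullet> b)) / \<Delta>"
  define m where "m = (s * (a \<bullet> a) - r * (a \<bullet> b)) / \<Delta>"
  define P0 where "P0 = l *\<^sub>R a + m *\<^sub>R b"
  have lagrange: "(a \<bullet> a) * (b \<bullet> b) - (a \<bullet> b)\<^sup>2 = \<Delta>"
    unfolding \<Delta>_def by (rule lagrange_identity)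
  have "(r * (b \<bullet> b) - s * (a \<bullet> b)) * (a \<bullet> a) + (s * (a \<bullet> a) - r * (a \<bullet> b)) * (a \<bullet> b) = r * \<Delta>"
    unfolding lagrange[symmetric] by algebra
  moreover have "(r * (b \<bullet> b) - s * (a \<bullet> b)) * (a \<bullet> b) + (s * (a \<bullet> a) - r * (a \<bullet> b)) * (b \<bullet> b) = s * \<Delta>"
    unfolding lagrange[symmetric] by algebra
  ultimately have "l * (a \<bullet> a) + m * (a \<bullet> b) = r" "l * (a \<bullet> b) + m * (b \<bullet> b) = s"
    using \<open>\<Delta> > 0\<close> unfolding l_def m_def by (simp_all add: add_divide_distrib[symmetric])
  then have P0: "a \<bullet> P0 = r" "b \<bullet> P0 = s"
    unfolding P0_def by (simp_all add: inner_add_right inner_commute)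
  have "P \<in> line3 P0 ?V" if "a \<bullet> P = r" "b \<bullet> P = s" for P
  proof -
    have "a \<bullet> (P - P0) = 0" "b \<bullet> (P - P0) = 0" using that P0 by (simp_all add: inner_diff_right)
    from orthogonal_to_both_parallel_cross_triple[OF this]
    have parallel: "\<Delta> *\<^sub>R (P - P0) = (?V \<bullet> (P - P0)) *\<^sub>R ?V" by (simp add: \<Delta>_def)
    have "P - P0 = (1 / \<Delta>) *\<^sub>R (\<Delta> *\<^sub>R (P - P0))" using \<open>\<Delta> > 0\<close> by simp
    also have "\<dots> = ((?V \<bullet> (P - P0)) / \<Delta>) *\<^sub>R ?V" unfolding parallel by simp
    finally have "P - P0 = ((?V \<bullet> (P - P0)) / \<Delta>) *\<^sub>R ?V" .
    then have "P = P0 + ((?V \<bullet> (P - P0)) / \<Delta>) *\<^sub>R ?V" by (metis add.commute diff_add_cancel)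
    then show ?thesis unfolding line3_def by blast
  qed
  moreover have "a \<bullet> (P0 + t *\<^sub>R ?V) = r" "b \<bullet> (P0 + t *\<^sub>R ?V) = s" for t
    using P0 by (simp_all add: inner_add_right inner_cross_triple)
  ultimately have "plane3 a r \<inter> plane3 b s = line3 P0 ?V"
    unfolding plane3_def line3_def by blast
  then show ?thesis by (rule that)
qed

lemma not_same_ray_distinct:
  assumes "\<not> same_ray A B"
  shows "A \<noteq> 0" "B \<noteq> 0" "A \<noteq> B"
proof -
  have in_ray: "t *\<^sub>R u \<in> ray u" if "t \<ge> 0" for t u using that unfolding ray_def by blast
  have same: "same_ray A B" if "u \<noteq> 0" "A = s *\<^sub>R u" "B = t *\<^sub>R u" "s \<ge> 0" "t \<ge> 0" for u s t
    unfolding same_ray_def using that in_ray by blast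
  show A: "A \<noteq> 0"
  proof
    assume "A = 0"
    have "(1::real, 0::real) \<noteq> 0" by (simp add: zero_prod_def)
    then show False
      using assms same[of B 0 1] same[of "(1, 0)" 0 0] \<open>A = 0\<close> by (cases "B = 0") (simp_all add: zero_prod_def)
  qed
  show "B \<noteq> 0" using assms A same[of A 1 0] by auto
  show "A \<noteq> B" using assms A same[of A 1 1] by auto
qed

lemma origin_in_open_segment:
  assumes "0 \<in> open_segment A B"
  obtains k where "k > 0" "B = (- k) *\<^sub>R A"
proof -
  obtain u where u: "0 < u" "u < 1" "0 = (1 - u) *\<^sub>R A + u *\<^sub>R B"
    using assms unfolding in_segment by blast
  then have uB: "u *\<^sub>R B = - ((1 - u) *\<^sub>R A)" by (simp add: eq_neg_iff_add_eq_0 add.commute)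
  have "B = (1 / u) *\<^sub>R (u *\<^sub>R B)" using u(1) by simp
  also have "\<dots> = (- ((1 - u) / u)) *\<^sub>R A" unfolding uB by simp
  finally show ?thesis using u by (intro that[of "(1 - u) / u"]) auto
qed

lemma collinear_with_origin_cases:
  assumes A: "A \<noteq> 0" and B: "B \<noteq> 0" and cross: "cross2 A B = 0"
  shows "same_ray A B \<or> 0 \<in> open_segment A B"
proof -
  define k where "k = (fst A * fst B + snd A * snd B) / (norm A)\<^sup>2"
  have "(norm A)\<^sup>2 > 0" using A by simp
  then have nA: "(norm A)\<^sup>2 = (fst A)\<^sup>2 + (snd A)\<^sup>2" "(norm A)\<^sup>2 > 0"
    by (simp_all only: norm_pair_square)
  have "fst B * (norm A)\<^sup>2 = (fst A * fst B + snd A * snd B) * fst A"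
    "snd B * (norm A)\<^sup>2 = (fst A * fst B + snd A * snd B) * snd A"
    using cross unfolding nA(1) cross2_def by algebra+
  then have Bk: "B = k *\<^sub>R A" using nA(2) by (cases A, cases B) (simp add: k_def field_simps)
  then have "k \<noteq> 0" using B by auto
  then consider "k > 0" | "k < 0" by linarith
  then show ?thesis
  proof cases
    case 1
    have "A \<in> ray A" "B \<in> ray A" unfolding ray_def using Bk 1 by (auto intro: exI[of _ 1] exI[of _ k])
    then show ?thesis using A unfolding same_ray_def by blast
  next
    case 2
    define u where "u = 1 / (1 - k)"
    have u: "0 < u" "u < 1" unfolding u_def using 2 by (auto simp: field_simps)
    have "(1 - u) *\<^sub>R A + u *\<^sub>R B = ((1 - u) + u * k) *\<^sub>R A" unfolding Bk by (simp add: algebra_simps)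
    also have "(1 - u) + u * k = 0" unfolding u_def using 2 by (simp add: field_simps)
    finally have "0 = (1 - u) *\<^sub>R A + u *\<^sub>R B" by simp
    moreover have "A \<noteq> B"
    proof
      assume "A = B"
      then have "(1 - k) *\<^sub>R A = 0" using Bk by (simp add: algebra_simps)
      then show False using 2 A by simp
    qed
    ultimately show ?thesis using u unfolding in_segment by blast
  qed
qed

lemma branch_params_through_two_points:
  "branch_params ` {K \<in> IrrBranches. A \<in> K \<and> B \<in> K}
     = Hspace \<inter> (plane3 (fst A, snd A, 1) (norm A) \<inter> plane3 (fst B, snd B, 1) (norm B))"
  unfolding branch_params_image_Collect plane3_def mem_unifocal_iff_inner by auto

lemma line_through_two_points:
  assumes "A \<noteq> B"
  defines "V \<equiv> (snd A - snd B, fst B - fst A, cross2 A B)"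
  obtains P0 where "V \<noteq> 0"
    "plane3 (fst A, snd A, 1) (norm A) \<inter> plane3 (fst B, snd B, 1) (norm B) = line3 P0 V"
proof -
  have V: "V = cross_triple (fst A, snd A, 1) (fst B, snd B, 1)" by (simp add: V_def cross2_def)
  have "V \<noteq> 0" using assms(1) by (cases A, cases B) (auto simp: V_def zero_prod_def)
  then show ?thesis using plane3_inter_eq_line3 that unfolding V by blast
qed

lemma params_positive_if_origin_between:
  assumes "0 \<in> open_segment A B"
    and P: "P \<in> plane3 (fst A, snd A, 1) (norm A)" "P \<in> plane3 (fst B, snd B, 1) (norm B)"
  shows "P \<in> Hspace"
proof -
  obtain k where k: "k > 0" "B = (- k) *\<^sub>R A" by (rule origin_in_open_segment[OF assms(1)])
  obtain x y z where xyz: "P = (x, y, z)" by (cases P) auto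
  have e1: "fst A * x + snd A * y = norm A - z" and e2: "- k * (fst A * x + snd A * y) + z = k * norm A"
    using P k by (simp_all add: xyz plane3_def inner_triple algebra_simps)
  from e2 have "- k * (norm A - z) + z = k * norm A" unfolding e1 .
  then have "z * (1 + k) = 2 * k * norm A" by (simp add: algebra_simps)
  moreover have "A \<noteq> 0" using assms(1) by (auto simp: k(2) in_segment)
  ultimately have "z * (1 + k) > 0" using k(1) by simp
  then show ?thesis using k(1) by (simp add: xyz Hspace_def zero_less_mult_iff)
qed

lemma branches_through_two_points:
  assumes "\<not> same_ray A B"
  shows "\<exists>P V. V \<noteq> 0 \<and>
            branch_params ` {K \<in> IrrBranches. A \<in> K \<and> B \<in> K} = Hspace \<inter> line3 P V \<and>
            (0 \<notin> open_segment A B \<longrightarrow> line3 P V \<inter> Hboundary \<noteq> {}) \<and>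
            (0 \<in> open_segment A B \<longrightarrow>
               line3 P V \<subseteq> Hspace \<and>
               (\<forall>X \<in> line3 P V. \<forall>Y \<in> line3 P V. gamma_coord X = gamma_coord Y))"
proof -
  note distinct = not_same_ray_distinct[OF assms]
  define V where "V = (snd A - snd B, fst B - fst A, cross2 A B)"
  obtain P0 where V: "V \<noteq> 0"
    and line: "plane3 (fst A, snd A, 1) (norm A) \<inter> plane3 (fst B, snd B, 1) (norm B) = line3 P0 V"
    using line_through_two_points[OF distinct(3)] unfolding V_def by blast
  have gamma: "gamma_coord (P0 + t *\<^sub>R V) = gamma_coord P0 + t * cross2 A B" for t
    by (simp add: V_def gamma_coord_def)
  have "line3 P0 V \<inter> Hboundary \<noteq> {}" if "0 \<notin> open_segment A B"
  proof -
    have "cross2 A B \<noteq> 0" using collinear_with_origin_cases distinct(1,2) assms that by blast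
    define X where "X = P0 + (- gamma_coord P0 / cross2 A B) *\<^sub>R V"
    have "gamma_coord X = 0" using gamma[of "- gamma_coord P0 / cross2 A B"] \<open>cross2 A B \<noteq> 0\<close>
      by (simp add: X_def)
    then have "X \<in> Hboundary" by (cases X) (simp add: Hboundary_def gamma_coord_def)
    moreover have "X \<in> line3 P0 V" unfolding line3_def X_def by blast
    ultimately show ?thesis by blast
  qed
  moreover have "line3 P0 V \<subseteq> Hspace \<and> (\<forall>X \<in> line3 P0 V. \<forall>Y \<in> line3 P0 V. gamma_coord X = gamma_coord Y)"
    if seg: "0 \<in> open_segment A B"
  proof
    show "line3 P0 V \<subseteq> Hspace"
      using params_positive_if_origin_between[OF seg] line by blast
    obtain k where "B = (- k) *\<^sub>R A" by (rule origin_in_open_segment[OF seg])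
    then have "cross2 A B = 0" by (simp add: cross2_def)
    then show "\<forall>X \<in> line3 P0 V. \<forall>Y \<in> line3 P0 V. gamma_coord X = gamma_coord Y"
      unfolding line3_def using gamma by auto
  qed
  ultimately show ?thesis
    using V line branch_params_through_two_points[of A B] by blast
qed

theorem lemma3:
  shows "bij_betw branch_params IrrBranches Hspace
    \<and> (\<forall>K \<in> IrrBranches. unifocal (branch_params K) = K)
    \<and> (\<forall>A. A \<noteq> 0 \<longrightarrow>
         (\<exists>n d. n \<noteq> 0 \<and>
            branch_params ` {K \<in> IrrBranches. A \<in> K} = Hspace \<inter> plane3 n d \<and>
            plane3 n d \<inter> Hboundary \<noteq> {} \<and> plane3 n d \<noteq> Hboundary))
    \<and> (\<forall>A B. \<not> same_ray A B \<longrightarrow>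
         (\<exists>P V. V \<noteq> 0 \<and>
            branch_params ` {K \<in> IrrBranches. A \<in> K \<and> B \<in> K} = Hspace \<inter> line3 P V \<and>
            (0 \<notin> open_segment A B \<longrightarrow> line3 P V \<inter> Hboundary \<noteq> {}) \<and>
            (0 \<in> open_segment A B \<longrightarrow>
               line3 P V \<subseteq> Hspace \<and>
               (\<forall>X \<in> line3 P V. \<forall>Y \<in> line3 P V. gamma_coord X = gamma_coord Y))))"
proof (intro conjI allI impI ballI)
  show "bij_betw branch_params IrrBranches Hspace" by (rule bij_branch_params)
  show "unifocal (branch_params K) = K" if "K \<in> IrrBranches" for K
    using branch_params_irreducible(2)[OF that] .
  show "\<exists>n d. n \<noteq> 0 \<and> branch_params ` {K \<in> IrrBranches. A \<in> K} = Hspace \<inter> plane3 n d \<and>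
      plane3 n d \<inter> Hboundary \<noteq> {} \<and> plane3 n d \<noteq> Hboundary" if "A \<noteq> 0" for A
    using branch_params_through_point plane_through_point[OF that]
    by (intro exI[of _ "(fst A, snd A, 1)"] exI[of _ "norm A"]) (simp add: zero_prod_def)
qed (rule branches_through_two_points)

end
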